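(* Let $\mathbb{F}$ be an algebraically closed field of characteristic different from $2$. There is no non-abelian nilpotent Lie algebra $L$ of finite dimension $n$ over $\mathbb{F}$ with $s(L)=5$ such that either (i) $\dim L^{2}\ge 4$, or (ii) $\dim L^{2}=1$.
   Context: Schur multiplier: if $L\cong F/R$ with $F$ a free Lie algebra, then $\mathcal{M}(L)\cong (R\cap F^{2})/[R,F]$. For a non-abelian nilpotent Lie algebra $L$ of dimension $n$, the integer $s(L)\ge 0$ is defined by $\dim\mathcal{M}(L)=\frac12(n-1)(n-2)+1-s(L)$. $L^2=[L,L]$. *)

theory Defs
  imports Main "HOL-Computational_Algebra.Polynomial"
begin

definition alg_closed_field :: "'f::field itself \<Rightarrow> bool" where
  "alg_closed_field _ \<longleftrightarrow> (\<forall>p::'f poly. degree p > 0 \<longrightarrow> (\<exists>x. poly p x = 0))"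

definition lie_algebra ::
  "('f::field \<Rightarrow> 'v::ab_group_add \<Rightarrow> 'v) \<Rightarrow> ('v \<Rightarrow> 'v \<Rightarrow> 'v) \<Rightarrow> bool" where
  "lie_algebra scale br \<longleftrightarrow> vector_space scale \<and>
     (\<forall>x y z. br (x + y) z = br x z + br y z) \<and>
     (\<forall>x y z. br x (y + z) = br x y + br x z) \<and>
     (\<forall>a x y. br (scale a x) y = scale a (br x y)) \<and>
     (\<forall>a x y. br x (scale a y) = scale a (br x y)) \<and>
     (\<forall>x. br x x = 0) \<and>
     (\<forall>x y z. br x (br y z) + br y (br z x) + br z (br x y) = 0)"

definition finite_dim ::
  "('f::field \<Rightarrow> 'v::ab_group_add \<Rightarrow> 'v) \<Rightarrow> bool" where
  "finite_dim scale \<longleftrightarrow> (\<exists>B. finite B \<and> module.span scale B = UNIV)"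

fun lcs :: "('f::field \<Rightarrow> 'v::ab_group_add \<Rightarrow> 'v) \<Rightarrow> ('v \<Rightarrow> 'v \<Rightarrow> 'v) \<Rightarrow> nat \<Rightarrow> 'v set" where
  "lcs scale br 0 = UNIV"
| "lcs scale br (Suc 0) = UNIV"
| "lcs scale br (Suc (Suc k)) =
     module.span scale {br x y | x y. y \<in> lcs scale br (Suc k)}"

definition derived :: "('f::field \<Rightarrow> 'v::ab_group_add \<Rightarrow> 'v) \<Rightarrow> ('v \<Rightarrow> 'v \<Rightarrow> 'v) \<Rightarrow> 'v set" where
  "derived scale br = module.span scale {br x y | x y. True}"

definition nilpotent_lie :: "('f::field \<Rightarrow> 'v::ab_group_add \<Rightarrow> 'v) \<Rightarrow> ('v \<Rightarrow> 'v \<Rightarrow> 'v) \<Rightarrow> bool" where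
  "nilpotent_lie scale br \<longleftrightarrow> (\<exists>k. lcs scale br k = {0})"

definition abelian_lie :: "('v::ab_group_add \<Rightarrow> 'v \<Rightarrow> 'v) \<Rightarrow> bool" where
  "abelian_lie br \<longleftrightarrow> (\<forall>x y. br x y = 0)"

text \<open>Free (non-associative) magma algebra A(X) on X = the underlying set of L:
  finitely supported functions on bracket terms.  The free Lie algebra F on X is
  A(X)/I, where I is the two-sided ideal generated by all a*a and all Jacobi
  expressions.  The canonical epimorphism F \<rightarrow> L sends the generator x to x.
  Pulling the Hopf formula (R \<inter> F^2)/[R,F] back to A(X) gives
  (K \<inter> A^2)/([K,A] + I), where K is the kernel of the evaluation A(X) \<rightarrow> L
  (note preimage of F^2 is A^2 since I \<subseteq> A^2, and the preimage of R is K).\<close>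

datatype 'x tm = Gen 'x | Br "'x tm" "'x tm"

type_synonym ('x, 'f) fa = "'x tm \<Rightarrow> 'f"

definition FA :: "('x, 'f::field) fa set" where
  "FA = {c. finite {t. c t \<noteq> 0}}"

definition fa_add :: "('x, 'f::field) fa \<Rightarrow> ('x, 'f) fa \<Rightarrow> ('x, 'f) fa" where
  "fa_add c d = (\<lambda>t. c t + d t)"

definition fa_scale :: "'f::field \<Rightarrow> ('x, 'f) fa \<Rightarrow> ('x, 'f) fa" where
  "fa_scale a c = (\<lambda>t. a * c t)"

definition fa_zero :: "('x, 'f::field) fa" where
  "fa_zero = (\<lambda>t. 0)"

definition fa_mult :: "('x, 'f::field) fa \<Rightarrow> ('x, 'f) fa \<Rightarrow> ('x, 'f) fa" where
  "fa_mult c d = (\<lambda>t. case t of Gen _ \<Rightarrow> 0 | Br s u \<Rightarrow> c s * d u)"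

definition fa_span :: "('x, 'f::field) fa set \<Rightarrow> ('x, 'f) fa set" where
  "fa_span S = {v. \<exists>T c. finite T \<and> T \<subseteq> S \<and> v = (\<lambda>t. \<Sum>s\<in>T. c s * s t)}"

definition fa_sq :: "('x, 'f::field) fa set" where
  "fa_sq = fa_span {fa_mult a b | a b. a \<in> FA \<and> b \<in> FA}"

inductive_set lie_rel_ideal :: "('x, 'f::field) fa set" where
  alt: "a \<in> FA \<Longrightarrow> fa_mult a a \<in> lie_rel_ideal"
| jac: "a \<in> FA \<Longrightarrow> b \<in> FA \<Longrightarrow> c \<in> FA \<Longrightarrow>
     fa_add (fa_add (fa_mult a (fa_mult b c)) (fa_mult b (fa_mult c a))) (fa_mult c (fa_mult a b))
       \<in> lie_rel_ideal"
| zero: "fa_zero \<in> lie_rel_ideal"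
| add: "u \<in> lie_rel_ideal \<Longrightarrow> v \<in> lie_rel_ideal \<Longrightarrow> fa_add u v \<in> lie_rel_ideal"
| smult: "u \<in> lie_rel_ideal \<Longrightarrow> fa_scale r u \<in> lie_rel_ideal"
| multl: "u \<in> lie_rel_ideal \<Longrightarrow> a \<in> FA \<Longrightarrow> fa_mult a u \<in> lie_rel_ideal"
| multr: "u \<in> lie_rel_ideal \<Longrightarrow> a \<in> FA \<Longrightarrow> fa_mult u a \<in> lie_rel_ideal"

fun eval_tm :: "('v \<Rightarrow> 'v \<Rightarrow> 'v) \<Rightarrow> 'v tm \<Rightarrow> 'v" where
  "eval_tm br (Gen x) = x"
| "eval_tm br (Br s u) = br (eval_tm br s) (eval_tm br u)"

definition eval_fa ::
  "('f::field \<Rightarrow> 'v::ab_group_add \<Rightarrow> 'v) \<Rightarrow> ('v \<Rightarrow> 'v \<Rightarrow> 'v) \<Rightarrow> ('v, 'f) fa \<Rightarrow> 'v" where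
  "eval_fa scale br c = (\<Sum>t\<in>{t. c t \<noteq> 0}. scale (c t) (eval_tm br t))"

definition pres_kernel ::
  "('f::field \<Rightarrow> 'v::ab_group_add \<Rightarrow> 'v) \<Rightarrow> ('v \<Rightarrow> 'v \<Rightarrow> 'v) \<Rightarrow> ('v, 'f) fa set" where
  "pres_kernel scale br = {c \<in> FA. eval_fa scale br c = 0}"

definition quot_dim :: "('x, 'f::field) fa set \<Rightarrow> ('x, 'f) fa set \<Rightarrow> nat \<Rightarrow> bool" where
  "quot_dim V W d \<longleftrightarrow> (\<exists>S. finite S \<and> card S = d \<and> S \<subseteq> V \<and>
      V \<subseteq> fa_span (S \<union> W) \<and>
      (\<forall>c. (\<lambda>t. \<Sum>s\<in>S. c s * s t) \<in> W \<longrightarrow> (\<forall>s\<in>S. c s = 0)))"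

definition schur_dim ::
  "('f::field \<Rightarrow> 'v::ab_group_add \<Rightarrow> 'v) \<Rightarrow> ('v \<Rightarrow> 'v \<Rightarrow> 'v) \<Rightarrow> nat" where
  "schur_dim scale br =
     (THE d. quot_dim (pres_kernel scale br \<inter> fa_sq)
        (fa_span ({fa_mult r a | r a. r \<in> pres_kernel scale br \<and> a \<in> FA} \<union> lie_rel_ideal)) d)"

definition s_inv ::
  "('f::field \<Rightarrow> 'v::ab_group_add \<Rightarrow> 'v) \<Rightarrow> ('v \<Rightarrow> 'v \<Rightarrow> 'v) \<Rightarrow> int" where
  "s_inv scale br =
     (let n = int (vector_space.dim scale (UNIV :: 'v set))
      in (n - 1) * (n - 2) div 2 + 1 - int (schur_dim scale br))"

end

(*
  By the Hopf formula, dim M(L) = dim (K /\ A^2) / J, where A = A(X) is the free magma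
  algebra on the underlying set of L, K is the kernel of the evaluation A -> L and
  J = [K, A] + I with I the ideal of Lie relations. Let n = dim L, m = dim L^2, k = n - m.

  Upper bound (L nilpotent, m >= 1): refine 0 < L^2 by ideals 0 = N_0 < ... < N_m = L^2,
  each obtained from the previous one by adjoining an element that is central modulo it.
  Modulo J(L^2), A^2 is spanned by the k(k-1)/2 products of pairs from a complement of
  L^2; going down from J(N_(i+1)) to J(N_i) costs at most k further products, the first
  step down from L^2 only two. Together with lifts of a basis of L^2 this gives
  dim M(L) + m <= k(k-1)/2 + 2 + (m-1)k, that is s(L) >= (m-1)(m-2)/2 + m - 1 >= 6
  for m >= 4.

  Lower bound (m = 1): L^2 = <z> is central. For a basis f_1, ..., f_k, z of L with
  [f_i, f_j] = c_ij z and c_pq <> 0, the elements f_i f_j - (c_ij / c_pq) f_p f_q of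
  K /\ A^2 are independent modulo J, as the alternating forms x_a y_b - x_b y_a applied
  to outermost brackets vanish on J. So dim M(L) >= k(k-1)/2 - 1 and s(L) <= 2.

  Neither bound needs the field to be algebraically closed or of characteristic <> 2.
*)

theory Submission
  imports Defs "HOL-Library.Function_Algebras"
begin

section \<open>The free magma algebra\<close>

interpretation fa: vector_space "fa_scale :: 'f::field \<Rightarrow> ('x, 'f) fa \<Rightarrow> ('x, 'f) fa"
  by unfold_locales (auto simp: fa_scale_def fun_eq_iff algebra_simps)

lemma fa_add_eq_plus [simp]: "fa_add c d = c + d"
  by (simp add: fa_add_def fun_eq_iff)

lemma fa_zero_eq_zero [simp]: "fa_zero = 0"
  by (simp add: fa_zero_def fun_eq_iff)

lemma fa_scale_apply: "fa_scale a c t = a * c t"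
  by (simp add: fa_scale_def)

text \<open>Pointwise evaluation is only unfolded on demand, so that elements of \<open>A(X)\<close> are
  simplified as vectors.\<close>

lemmas fa_apply = plus_fun_apply zero_fun_apply uminus_apply minus_apply fa_scale_apply
declare plus_fun_apply [simp del] zero_fun_apply [simp del] uminus_apply [simp del]
  minus_apply [simp del]

lemma sum_fun_apply: "(\<Sum>a\<in>T. g a) x = (\<Sum>a\<in>T. g a x)"
  by (induction T rule: infinite_finite_induct) (auto simp: fa_apply)

lemma fa_span_eq_span: "fa_span S = fa.span S"
proof -
  have "fa.span S = {(\<Sum>a\<in>t. fa_scale (r a) a) |t r. finite t \<and> t \<subseteq> S}"
    by (rule fa.span_explicit)
  then show ?thesis
    unfolding fa_span_def fa_scale_def by (auto simp: fun_eq_iff sum_fun_apply)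
qed

lemma fa_sq_eq_span: "fa_sq = fa.span {fa_mult a b | a b. a \<in> FA \<and> b \<in> FA}"
  by (simp add: fa_sq_def fa_span_eq_span)

definition fa_supp :: "('x, 'f::field) fa \<Rightarrow> 'x tm set" where
  "fa_supp c = {t. c t \<noteq> 0}"

lemma FA_iff_finite_supp: "c \<in> FA \<longleftrightarrow> finite (fa_supp c)"
  by (simp add: FA_def fa_supp_def)

lemma fa_supp_add: "fa_supp (c + d) \<subseteq> fa_supp c \<union> fa_supp d"
  by (auto simp: fa_supp_def fa_apply)

lemma fa_supp_scale: "fa_supp (fa_scale a c) \<subseteq> fa_supp c"
  by (auto simp: fa_supp_def fa_apply)

lemma subspace_FA: "fa.subspace (FA :: ('x, 'f::field) fa set)"
  unfolding fa.subspace_def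
  by (auto simp: FA_iff_finite_supp fa_supp_def[of 0] fa_apply
      intro: finite_subset[OF fa_supp_add] finite_subset[OF fa_supp_scale])

lemma FA_0 [simp]: "0 \<in> FA"
  using fa.subspace_0[OF subspace_FA] .

lemma FA_add [simp]: "c \<in> FA \<Longrightarrow> d \<in> FA \<Longrightarrow> c + d \<in> FA"
  using fa.subspace_add[OF subspace_FA] .

lemma FA_scale [simp]: "c \<in> FA \<Longrightarrow> fa_scale a c \<in> FA"
  using fa.subspace_scale[OF subspace_FA] .

lemma FA_diff [simp]: "c \<in> FA \<Longrightarrow> d \<in> FA \<Longrightarrow> c - d \<in> FA"
  using fa.subspace_diff[OF subspace_FA] .

lemma FA_sum: "(\<And>i. i \<in> A \<Longrightarrow> g i \<in> FA) \<Longrightarrow> sum g A \<in> FA"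
  using fa.subspace_sum[OF subspace_FA] by blast

lemma span_subset_FA: "S \<subseteq> FA \<Longrightarrow> fa.span S \<subseteq> FA"
  using fa.span_minimal subspace_FA by blast

lemma fa_mult_Br [simp]: "fa_mult c d (Br s u) = c s * d u"
  by (simp add: fa_mult_def)

lemma fa_mult_Gen [simp]: "fa_mult c d (Gen x) = 0"
  by (simp add: fa_mult_def)

lemma fa_mult_add_left: "fa_mult (c + d) e = fa_mult c e + fa_mult d e"
  and fa_mult_add_right: "fa_mult e (c + d) = fa_mult e c + fa_mult e d"
  and fa_mult_diff_left: "fa_mult (c - d) e = fa_mult c e - fa_mult d e"
  and fa_mult_diff_right: "fa_mult e (c - d) = fa_mult e c - fa_mult e d"
  and fa_mult_scale_left: "fa_mult (fa_scale a c) e = fa_scale a (fa_mult c e)"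
  and fa_mult_scale_right: "fa_mult e (fa_scale a c) = fa_scale a (fa_mult e c)"
  and fa_mult_zero_left [simp]: "fa_mult 0 e = 0"
  and fa_mult_zero_right [simp]: "fa_mult e 0 = 0"
  by (auto simp: fa_mult_def fun_eq_iff algebra_simps fa_apply split: tm.split)

lemma fa_supp_mult: "fa_supp (fa_mult c d) \<subseteq> case_prod Br ` (fa_supp c \<times> fa_supp d)"
proof
  fix t assume "t \<in> fa_supp (fa_mult c d)"
  then show "t \<in> case_prod Br ` (fa_supp c \<times> fa_supp d)"
    by (cases t) (auto simp: fa_supp_def image_iff)
qed

lemma FA_mult [simp]: "c \<in> FA \<Longrightarrow> d \<in> FA \<Longrightarrow> fa_mult c d \<in> FA"
  unfolding FA_iff_finite_supp by (rule finite_subset[OF fa_supp_mult]) auto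

definition fa_gen :: "'x \<Rightarrow> ('x, 'f::field) fa" where
  "fa_gen x = (\<lambda>t. if t = Gen x then 1 else 0)"

lemma fa_supp_gen: "fa_supp (fa_gen x) = {Gen x}"
  by (auto simp: fa_supp_def fa_gen_def)

lemma FA_gen [simp]: "fa_gen x \<in> FA"
  by (simp add: FA_iff_finite_supp fa_supp_gen)

lemma FA_lie_rel_ideal: "u \<in> lie_rel_ideal \<Longrightarrow> u \<in> FA"
  by (induction rule: lie_rel_ideal.induct)
    (simp_all only: fa_add_eq_plus fa_zero_eq_zero FA_add FA_mult FA_scale FA_0)

definition fa_extend ::
  "('f::field \<Rightarrow> 'v::ab_group_add \<Rightarrow> 'v) \<Rightarrow> ('x tm \<Rightarrow> 'v) \<Rightarrow> ('x, 'f) fa \<Rightarrow> 'v" where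
  "fa_extend scale g c = (\<Sum>t\<in>fa_supp c. scale (c t) (g t))"

context vector_space
begin

lemma fa_extend_eq_sum:
  assumes "finite S" "fa_supp c \<subseteq> S"
  shows "fa_extend scale g c = (\<Sum>t\<in>S. scale (c t) (g t))"
  unfolding fa_extend_def
  by (rule sum.mono_neutral_left) (use assms in \<open>auto simp: fa_supp_def\<close>)

lemma fa_extend_add:
  assumes "c \<in> FA" "d \<in> FA"
  shows "fa_extend scale g (c + d) = fa_extend scale g c + fa_extend scale g d"
proof -
  let ?S = "fa_supp c \<union> fa_supp d"
  have S: "finite ?S"
    using assms by (simp add: FA_iff_finite_supp)
  have "fa_extend scale g (c + d) = (\<Sum>t\<in>?S. scale ((c + d) t) (g t))"
    by (rule fa_extend_eq_sum[OF S fa_supp_add])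
  also have "\<dots> = (\<Sum>t\<in>?S. scale (c t) (g t)) + (\<Sum>t\<in>?S. scale (d t) (g t))"
    by (simp add: scale_left_distrib sum.distrib fa_apply)
  finally show ?thesis
    using fa_extend_eq_sum[OF S, of c] fa_extend_eq_sum[OF S, of d] by auto
qed

lemma fa_extend_scale:
  assumes "c \<in> FA"
  shows "fa_extend scale g (fa_scale a c) = scale a (fa_extend scale g c)"
proof -
  have S: "finite (fa_supp c)"
    using assms by (simp add: FA_iff_finite_supp)
  have "fa_extend scale g (fa_scale a c) = (\<Sum>t\<in>fa_supp c. scale (a * c t) (g t))"
    using fa_extend_eq_sum[OF S fa_supp_scale] by (simp add: fa_apply)
  then show ?thesis
    by (simp add: fa_extend_def scale_sum_right)
qed

lemma fa_extend_zero [simp]: "fa_extend scale g 0 = 0"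
  by (simp add: fa_extend_def fa_supp_def fa_apply)

lemma fa_extend_diff:
  assumes "c \<in> FA" "d \<in> FA"
  shows "fa_extend scale g (c - d) = fa_extend scale g c - fa_extend scale g d"
  using fa_extend_add[of "c - d" d g] assms by (simp add: eq_diff_eq)

lemma fa_extend_sum:
  "(\<And>i. i \<in> A \<Longrightarrow> h i \<in> FA) \<Longrightarrow>
    fa_extend scale g (sum h A) = (\<Sum>i\<in>A. fa_extend scale g (h i))"
proof (induction A rule: infinite_finite_induct)
  case (insert x F)
  then show ?case
    using fa_extend_add[of "h x" "sum h F" g] FA_sum[of F h] by simp
qed auto

lemma fa_extend_gen [simp]: "fa_extend scale g (fa_gen x) = g (Gen x)"
proof -
  have "fa_extend scale g (fa_gen x) = (\<Sum>t\<in>{Gen x}. scale (fa_gen x t) (g t))"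
    by (rule fa_extend_eq_sum) (simp_all add: fa_supp_gen)
  then show ?thesis
    by (simp add: fa_gen_def)
qed

lemma fa_extend_mult:
  assumes "c \<in> FA" "d \<in> FA"
    and g: "\<And>s u. g (Br s u) = \<beta> (g1 s) (g2 u)"
    and \<beta>_scale: "\<And>a b x y. \<beta> (scale a x) (scale b y) = scale (a * b) (\<beta> x y)"
    and \<beta>_add_left: "\<And>x x' y. \<beta> (x + x') y = \<beta> x y + \<beta> x' y"
    and \<beta>_add_right: "\<And>x y y'. \<beta> x (y + y') = \<beta> x y + \<beta> x y'"
  shows "fa_extend scale g (fa_mult c d) = \<beta> (fa_extend scale g1 c) (fa_extend scale g2 d)"
proof -
  have S: "finite (fa_supp c)" "finite (fa_supp d)"
    using assms by (auto simp: FA_iff_finite_supp)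
  have \<beta>_zero: "\<beta> 0 y = 0" "\<beta> x 0 = 0" for x y
    using \<beta>_add_left[of 0 0 y] \<beta>_add_right[of x 0 0] by simp_all
  have \<beta>_sum: "\<beta> (sum h A) y = (\<Sum>i\<in>A. \<beta> (h i) y)" "\<beta> x (sum h A) = (\<Sum>i\<in>A. \<beta> x (h i))"
    for h :: "'x tm \<Rightarrow> 'b" and A x y
    by (induction A rule: infinite_finite_induct) (simp_all add: \<beta>_zero \<beta>_add_left \<beta>_add_right)
  let ?P = "fa_supp c \<times> fa_supp d"
  have "fa_extend scale g (fa_mult c d) = (\<Sum>t\<in>case_prod Br ` ?P. scale (fa_mult c d t) (g t))"
    by (rule fa_extend_eq_sum[OF _ fa_supp_mult]) (use S in simp)
  also have "\<dots> = (\<Sum>(s, u)\<in>?P. scale (c s * d u) (g (Br s u)))"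
    by (subst sum.reindex) (auto simp: inj_on_def split_def)
  also have "\<dots> = (\<Sum>s\<in>fa_supp c. \<Sum>u\<in>fa_supp d. \<beta> (scale (c s) (g1 s)) (scale (d u) (g2 u)))"
    by (simp add: sum.cartesian_product g \<beta>_scale split_def)
  also have "\<dots> = \<beta> (fa_extend scale g1 c) (fa_extend scale g2 d)"
    by (simp add: fa_extend_def \<beta>_sum(1)) (simp add: \<beta>_sum(2))
  finally show ?thesis .
qed

end

section \<open>Dimension of a quotient of subspaces of the free algebra\<close>

definition independent_mod :: "('x, 'f::field) fa set \<Rightarrow> ('x, 'f) fa set \<Rightarrow> bool" where
  "independent_mod W U \<longleftrightarrow> (\<forall>c. (\<Sum>s\<in>U. fa_scale (c s) s) \<in> W \<longrightarrow> (\<forall>s\<in>U. c s = 0))"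

lemma quot_dim_iff:
  "quot_dim V W d \<longleftrightarrow>
     (\<exists>S. finite S \<and> card S = d \<and> S \<subseteq> V \<and> V \<subseteq> fa.span (S \<union> W) \<and> independent_mod W S)"
proof -
  have sum_eq: "(\<lambda>t. \<Sum>s\<in>S. c s * s t) = (\<Sum>s\<in>S. fa_scale (c s) s)" for S c
    by (simp add: fun_eq_iff sum_fun_apply fa_scale_apply)
  show ?thesis
    by (simp only: quot_dim_def independent_mod_def fa_span_eq_span sum_eq)
qed

lemma independent_mod_shift_sum_eq_0:
  fixes W :: "('x, 'f::field) fa set"
  assumes W: "fa.subspace W" and ind: "independent_mod W U" and w: "w ` U \<subseteq> W"
    and sum: "(\<Sum>u\<in>U. fa_scale (c u) (u - w u)) = 0"
  shows "\<forall>u\<in>U. c u = 0"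
proof -
  have "(\<Sum>u\<in>U. fa_scale (c u) u) = (\<Sum>u\<in>U. fa_scale (c u) (w u))"
    using sum by (simp add: fa.scale_right_diff_distrib sum_subtractf)
  also have "\<dots> \<in> W"
    using w W by (intro fa.subspace_sum fa.subspace_scale) auto
  finally show ?thesis
    using ind unfolding independent_mod_def by blast
qed

lemma inj_on_independent_mod_shift:
  fixes W :: "('x, 'f::field) fa set"
  assumes W: "fa.subspace W" and U: "finite U" and ind: "independent_mod W U"
    and w: "w ` U \<subseteq> W"
  shows "inj_on (\<lambda>u. u - w u) U"
proof (rule inj_onI, rule ccontr)
  fix u1 u2 assume u: "u1 \<in> U" "u2 \<in> U" "u1 - w u1 = u2 - w u2" "u1 \<noteq> u2"
  have delta: "(\<Sum>s\<in>U. fa_scale (if s = v then 1 else 0) (s - w s)) = v - w v" if "v \<in> U" for v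
  proof -
    have "(\<Sum>s\<in>U. fa_scale (if s = v then 1 else 0) (s - w s)) = (\<Sum>s\<in>U. if s = v then s - w s else 0)"
      by (rule sum.cong) auto
    then show ?thesis
      using U that by simp
  qed
  define c where "c s = (if s = u1 then 1 else 0) - (if s = u2 then 1 else 0 :: 'f)" for s
  have "(\<Sum>s\<in>U. fa_scale (c s) (s - w s)) = (u1 - w u1) - (u2 - w u2)"
    using delta[OF u(1)] delta[OF u(2)] by (simp add: c_def fa.scale_left_diff_distrib sum_subtractf)
  then have "(\<Sum>s\<in>U. fa_scale (c s) (s - w s)) = 0"
    using u(3) by simp
  then have "\<forall>s\<in>U. c s = 0"
    by (rule independent_mod_shift_sum_eq_0[OF W ind w])
  then show False
    using u by (auto simp: c_def)
qed

lemma independent_independent_mod_shift: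
  fixes W :: "('x, 'f::field) fa set"
  assumes W: "fa.subspace W" and U: "finite U" and ind: "independent_mod W U"
    and w: "w ` U \<subseteq> W"
  shows "fa.independent ((\<lambda>u. u - w u) ` U)"
proof
  assume "fa.dependent ((\<lambda>u. u - w u) ` U)"
  then obtain c where c: "\<exists>v\<in>(\<lambda>u. u - w u) ` U. c v \<noteq> 0"
    "(\<Sum>v\<in>(\<lambda>u. u - w u) ` U. fa_scale (c v) v) = 0"
    using fa.dependent_finite[of "(\<lambda>u. u - w u) ` U"] U by auto
  have "(\<Sum>u\<in>U. fa_scale (c (u - w u)) (u - w u)) = 0"
    using c(2) by (simp add: sum.reindex[OF inj_on_independent_mod_shift[OF W U ind w]])
  then have "\<forall>u\<in>U. c (u - w u) = 0"
    by (rule independent_mod_shift_sum_eq_0[OF W ind w])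
  then show False
    using c(1) by auto
qed

lemma independent_mod_card_le:
  fixes W :: "('x, 'f::field) fa set"
  assumes W: "fa.subspace W" and T: "finite T" and U: "finite U"
    and sp: "U \<subseteq> fa.span (T \<union> W)" and ind: "independent_mod W U"
  shows "card U \<le> card T"
proof -
  have "\<exists>w. w \<in> W \<and> u - w \<in> fa.span T" if "u \<in> U" for u
  proof -
    obtain x y where "u = x + y" "x \<in> fa.span T" "y \<in> fa.span W"
      using sp \<open>u \<in> U\<close> unfolding fa.span_Un by blast
    then show ?thesis
      using fa.span_minimal[OF order.refl W] by (intro exI[of _ y]) auto
  qed
  then obtain w where w: "\<And>u. u \<in> U \<Longrightarrow> w u \<in> W" "\<And>u. u \<in> U \<Longrightarrow> u - w u \<in> fa.span T"
    by metis
  have "w ` U \<subseteq> W"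
    using w(1) by auto
  note shift = inj_on_independent_mod_shift[OF W U ind this] independent_independent_mod_shift[OF W U ind this]
  have "card ((\<lambda>u. u - w u) ` U) \<le> card T"
    using fa.independent_span_bound[OF T shift(2)] w(2) by auto
  then show ?thesis
    using card_image[OF shift(1)] by simp
qed

lemma independent_mod_insert:
  fixes W :: "('x, 'f::field) fa set"
  assumes U: "finite U" and ind: "independent_mod W U" and v: "v \<notin> fa.span (U \<union> W)"
  shows "independent_mod W (insert v U)"
  unfolding independent_mod_def
proof (intro allI impI)
  fix c assume c: "(\<Sum>s\<in>insert v U. fa_scale (c s) s) \<in> W"
  have "v \<notin> U"
    using v fa.span_base by blast
  then have sum_insert: "(\<Sum>s\<in>insert v U. fa_scale (c s) s) = fa_scale (c v) v + (\<Sum>s\<in>U. fa_scale (c s) s)"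
    using U by simp
  have cv: "c v = 0"
  proof (rule ccontr)
    assume "c v \<noteq> 0"
    then have "v = fa_scale (inverse (c v))
        ((\<Sum>s\<in>insert v U. fa_scale (c s) s) - (\<Sum>s\<in>U. fa_scale (c s) s))"
      by (simp add: sum_insert fa.scale_scale)
    also have "\<dots> \<in> fa.span (U \<union> W)"
      using c by (intro fa.span_scale fa.span_diff fa.span_sum fa.span_base) auto
    finally show False
      using v by simp
  qed
  then have "(\<Sum>s\<in>U. fa_scale (c s) s) \<in> W"
    using c sum_insert by simp
  then show "\<forall>s\<in>insert v U. c s = 0"
    using ind cv unfolding independent_mod_def by blast
qed

lemma quot_dim_exists:
  fixes W :: "('x, 'f::field) fa set"
  assumes W: "fa.subspace W" and T: "finite T" and V: "V \<subseteq> fa.span (T \<union> W)"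
  shows "\<exists>d. quot_dim V W d"
proof -
  define P where "P n \<longleftrightarrow> (\<exists>U. finite U \<and> card U = n \<and> U \<subseteq> V \<and> independent_mod W U)" for n
  have P0: "P 0"
    unfolding P_def independent_mod_def by (intro exI[of _ "{}"]) auto
  have bound: "P n \<Longrightarrow> n \<le> card T" for n
    unfolding P_def using independent_mod_card_le[OF W T] V by blast
  define n where "n = (GREATEST n. P n)"
  obtain U where U: "finite U" "card U = n" "U \<subseteq> V" "independent_mod W U"
    using GreatestI_nat[of P 0 "card T"] P0 bound unfolding n_def P_def by blast
  have "V \<subseteq> fa.span (U \<union> W)"
  proof (rule ccontr)
    assume "\<not> V \<subseteq> fa.span (U \<union> W)"
    then obtain v where v: "v \<in> V" "v \<notin> fa.span (U \<union> W)"
      by blast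
    moreover have "v \<notin> U"
      using v(2) fa.span_base[of v "U \<union> W"] by blast
    ultimately have "P (Suc n)"
      unfolding P_def using U independent_mod_insert[OF U(1) U(4) v(2)]
      by (intro exI[of _ "insert v U"]) auto
    then show False
      using Greatest_le_nat[of P "Suc n" "card T"] bound unfolding n_def by auto
  qed
  then show ?thesis
    unfolding quot_dim_iff using U by blast
qed

lemma card_le_quot_dim:
  fixes W :: "('x, 'f::field) fa set"
  assumes W: "fa.subspace W" and q: "quot_dim V W d"
    and U: "finite U" "U \<subseteq> fa.span (V \<union> W)" "independent_mod W U"
  shows "card U \<le> d"
proof -
  obtain S where S: "finite S" "card S = d" "V \<subseteq> fa.span (S \<union> W)"
    using q unfolding quot_dim_iff by blast
  have "fa.span (V \<union> W) \<subseteq> fa.span (S \<union> W)"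
    using S(3) fa.span_superset[of "S \<union> W"] by (intro fa.span_minimal) auto
  then show ?thesis
    using independent_mod_card_le[OF W S(1) U(1) _ U(3)] U(2) S(2) by blast
qed

lemma the_quot_dim:
  fixes W :: "('x, 'f::field) fa set"
  assumes W: "fa.subspace W" and q: "quot_dim V W d"
  shows "(THE d. quot_dim V W d) = d"
proof (rule the_equality[where P = "\<lambda>d. quot_dim V W d", OF q])
  have le: "d2 \<le> d1" if q1: "quot_dim V W d1" and q2: "quot_dim V W d2" for d1 d2
  proof -
    obtain S where "finite S" "card S = d2" "S \<subseteq> V" "independent_mod W S"
      using q2 unfolding quot_dim_iff by blast
    then show ?thesis
      using card_le_quot_dim[OF W q1] fa.span_superset[of "V \<union> W"] by blast
  qed
  fix d' assume "quot_dim V W d'"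
  then show "d' = d"
    using le[OF q] le[of d'] q by (simp add: antisym)
qed

section \<open>Lie algebras and the Hopf formula\<close>

locale lie = vector_space scale for scale :: "'f::field \<Rightarrow> 'v::ab_group_add \<Rightarrow> 'v" +
  fixes br :: "'v \<Rightarrow> 'v \<Rightarrow> 'v"
  assumes br_add_left: "br (x + y) z = br x z + br y z"
    and br_add_right: "br x (y + z) = br x y + br x z"
    and br_scale_left: "br (scale a x) y = scale a (br x y)"
    and br_scale_right: "br x (scale a y) = scale a (br x y)"
    and br_self: "br x x = 0"
    and br_jacobi: "br x (br y z) + br y (br z x) + br z (br x y) = 0"

lemma lie_algebra_imp_lie: "lie_algebra scale br \<Longrightarrow> lie scale br"
  unfolding lie_algebra_def lie_def lie_axioms_def by auto

lemma eval_fa_eq_fa_extend: "eval_fa scale br = fa_extend scale (eval_tm br)"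
  by (simp add: fun_eq_iff eval_fa_def fa_extend_def fa_supp_def)

context lie
begin

lemma br_zero_left [simp]: "br 0 y = 0"
  using br_add_left[of 0 0 y] by simp

lemma br_zero_right [simp]: "br x 0 = 0"
  using br_add_right[of x 0 0] by simp

lemma br_anticomm: "br x y = - br y x"
  using br_self[of "x + y"] br_self[of x] br_self[of y]
  by (simp add: br_add_left br_add_right eq_neg_iff_add_eq_0 add.commute)

lemma br_diff_left: "br (x - y) z = br x z - br y z"
  using br_add_left[of "x - y" y z] by (simp add: eq_diff_eq)

lemma br_diff_right: "br z (x - y) = br z x - br z y"
  using br_add_right[of z "x - y" y] by (simp add: eq_diff_eq)

abbreviation ev :: "('v, 'f) fa \<Rightarrow> 'v" where
  "ev \<equiv> eval_fa scale br"

lemma ev_add: "c \<in> FA \<Longrightarrow> d \<in> FA \<Longrightarrow> ev (c + d) = ev c + ev d"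
  by (simp add: eval_fa_eq_fa_extend fa_extend_add)

lemma ev_diff: "c \<in> FA \<Longrightarrow> d \<in> FA \<Longrightarrow> ev (c - d) = ev c - ev d"
  by (simp add: eval_fa_eq_fa_extend fa_extend_diff)

lemma ev_scale: "c \<in> FA \<Longrightarrow> ev (fa_scale a c) = scale a (ev c)"
  by (simp add: eval_fa_eq_fa_extend fa_extend_scale)

lemma ev_zero [simp]: "ev 0 = 0"
  by (simp add: eval_fa_eq_fa_extend)

lemma ev_sum: "(\<And>i. i \<in> A \<Longrightarrow> h i \<in> FA) \<Longrightarrow> ev (sum h A) = (\<Sum>i\<in>A. ev (h i))"
  by (simp add: eval_fa_eq_fa_extend fa_extend_sum)

lemma ev_gen [simp]: "ev (fa_gen x) = x"
  by (simp add: eval_fa_eq_fa_extend)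

lemma ev_mult: "c \<in> FA \<Longrightarrow> d \<in> FA \<Longrightarrow> ev (fa_mult c d) = br (ev c) (ev d)"
  unfolding eval_fa_eq_fa_extend
  by (rule fa_extend_mult) (simp_all add: br_add_left br_add_right br_scale_left br_scale_right)

lemma ev_lie_rel_ideal: "u \<in> lie_rel_ideal \<Longrightarrow> ev u = 0"
proof (induction rule: lie_rel_ideal.induct)
  case (jac a b c)
  then show ?case
    by (simp add: ev_mult ev_add br_jacobi)
qed (simp_all add: ev_mult ev_add ev_scale br_self FA_lie_rel_ideal)

definition ev_preimage :: "'v set \<Rightarrow> ('v, 'f) fa set" where
  "ev_preimage N = {c \<in> FA. ev c \<in> N}"

text \<open>For an ideal \<open>N\<close>, evaluation identifies \<open>A(X)/ev_preimage N\<close> with \<open>L/N\<close>, and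
  \<open>hopf_rel N\<close> is the denominator \<open>[K, A(X)] + I\<close> of the Hopf formula for \<open>L/N\<close>.\<close>

definition hopf_rel :: "'v set \<Rightarrow> ('v, 'f) fa set" where
  "hopf_rel N = fa.span ({fa_mult r a | r a. r \<in> ev_preimage N \<and> a \<in> FA} \<union> lie_rel_ideal)"

lemma subspace_hopf_rel: "fa.subspace (hopf_rel N)"
  unfolding hopf_rel_def by (rule fa.subspace_span)

lemma hopf_rel_add: "u \<in> hopf_rel N \<Longrightarrow> v \<in> hopf_rel N \<Longrightarrow> u + v \<in> hopf_rel N"
  using fa.subspace_add[OF subspace_hopf_rel] .

lemma hopf_rel_diff: "u \<in> hopf_rel N \<Longrightarrow> v \<in> hopf_rel N \<Longrightarrow> u - v \<in> hopf_rel N"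
  using fa.subspace_diff[OF subspace_hopf_rel] .

lemma lie_rel_ideal_in_hopf_rel: "u \<in> lie_rel_ideal \<Longrightarrow> u \<in> hopf_rel N"
  unfolding hopf_rel_def by (rule fa.span_base) blast

lemma mult_ev_preimage_left: "r \<in> ev_preimage N \<Longrightarrow> a \<in> FA \<Longrightarrow> fa_mult r a \<in> hopf_rel N"
  unfolding hopf_rel_def by (rule fa.span_base) blast

lemma fa_mult_anticomm_in_hopf_rel:
  assumes "a \<in> FA" "b \<in> FA"
  shows "fa_mult a b + fa_mult b a \<in> hopf_rel N"
proof -
  have "fa_mult (a + b) (a + b) - fa_mult a a - fa_mult b b \<in> hopf_rel N"
    using assms by (intro hopf_rel_diff lie_rel_ideal_in_hopf_rel lie_rel_ideal.alt) auto
  then show ?thesis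
    by (simp add: fa_mult_add_left fa_mult_add_right algebra_simps)
qed

lemma fa_mult_swap_mem:
  assumes Sp: "fa.subspace Sp" "hopf_rel N \<subseteq> Sp" and ab: "a \<in> FA" "b \<in> FA"
    and "fa_mult a b \<in> Sp"
  shows "fa_mult b a \<in> Sp"
proof -
  have "(fa_mult a b + fa_mult b a) - fa_mult a b \<in> Sp"
    using fa_mult_anticomm_in_hopf_rel[OF ab] assms by (intro fa.subspace_diff) auto
  then show ?thesis
    by simp
qed

lemma mult_ev_preimage_right: "r \<in> ev_preimage N \<Longrightarrow> a \<in> FA \<Longrightarrow> fa_mult a r \<in> hopf_rel N"
  using fa_mult_swap_mem[OF subspace_hopf_rel order.refl] mult_ev_preimage_left
  by (auto simp: ev_preimage_def)

lemma jacobi_in_hopf_rel: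
  "a \<in> FA \<Longrightarrow> b \<in> FA \<Longrightarrow> c \<in> FA \<Longrightarrow>
    fa_mult a (fa_mult b c) + fa_mult b (fa_mult c a) + fa_mult c (fa_mult a b) \<in> hopf_rel N"
  using lie_rel_ideal_in_hopf_rel[OF lie_rel_ideal.jac] by simp

lemma fa_gen_in_ev_preimage: "y \<in> N \<Longrightarrow> fa_gen y \<in> ev_preimage N"
  by (simp add: ev_preimage_def)

context
  fixes N assumes N: "subspace N"
begin

lemma diff_fa_gen_ev_in_ev_preimage: "c \<in> FA \<Longrightarrow> c - fa_gen (ev c) \<in> ev_preimage N"
  using N by (simp add: ev_preimage_def ev_diff subspace_0)

lemma fa_gen_add_in_ev_preimage: "fa_gen (x + y) - fa_gen x - fa_gen y \<in> ev_preimage N"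
  using N by (simp add: ev_preimage_def ev_diff subspace_0)

lemma fa_gen_scale_in_ev_preimage: "fa_gen (scale a x) - fa_scale a (fa_gen x) \<in> ev_preimage N"
  using N by (simp add: ev_preimage_def ev_diff ev_scale subspace_0)

lemma fa_gen_br_in_ev_preimage: "fa_gen (br x y) - fa_mult (fa_gen x) (fa_gen y) \<in> ev_preimage N"
  using N by (simp add: ev_preimage_def ev_diff ev_mult subspace_0)

lemma fa_mult_diff_gen_in_hopf_rel:
  assumes "a \<in> FA" "b \<in> FA"
  shows "fa_mult a b - fa_mult (fa_gen (ev a)) (fa_gen (ev b)) \<in> hopf_rel N"
proof -
  have "fa_mult a b - fa_mult (fa_gen (ev a)) (fa_gen (ev b)) =
      fa_mult (a - fa_gen (ev a)) b + fa_mult (fa_gen (ev a)) (b - fa_gen (ev b))"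
    by (simp add: fa_mult_diff_left fa_mult_diff_right)
  also have "\<dots> \<in> hopf_rel N"
    using assms
    by (intro hopf_rel_add mult_ev_preimage_left mult_ev_preimage_right diff_fa_gen_ev_in_ev_preimage)
      auto
  finally show ?thesis .
qed

text \<open>Modulo \<open>hopf_rel N\<close>, the products of generators are linear in the generators.\<close>

lemma subspace_fa_mult_gen_right:
  assumes Sp: "fa.subspace Sp" "hopf_rel N \<subseteq> Sp" and u: "u \<in> FA"
  shows "subspace {y. fa_mult u (fa_gen y) \<in> Sp}"
  unfolding subspace_def
proof (intro conjI allI impI ballI; clarsimp)
  show "fa_mult u (fa_gen 0) \<in> Sp"
    using mult_ev_preimage_right[OF fa_gen_in_ev_preimage[OF subspace_0[OF N]] u] Sp by auto
next
  fix x y assume "fa_mult u (fa_gen x) \<in> Sp" "fa_mult u (fa_gen y) \<in> Sp"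
  moreover have "fa_mult u (fa_gen (x + y) - fa_gen x - fa_gen y) \<in> Sp"
    using mult_ev_preimage_right[OF fa_gen_add_in_ev_preimage u] Sp by auto
  ultimately have "fa_mult u (fa_gen (x + y) - fa_gen x - fa_gen y) + fa_mult u (fa_gen x)
      + fa_mult u (fa_gen y) \<in> Sp"
    using Sp by (intro fa.subspace_add) auto
  then show "fa_mult u (fa_gen (x + y)) \<in> Sp"
    by (simp add: fa_mult_diff_right)
next
  fix a x assume "fa_mult u (fa_gen x) \<in> Sp"
  moreover have "fa_mult u (fa_gen (scale a x) - fa_scale a (fa_gen x)) \<in> Sp"
    using mult_ev_preimage_right[OF fa_gen_scale_in_ev_preimage u] Sp by auto
  ultimately have "fa_mult u (fa_gen (scale a x) - fa_scale a (fa_gen x))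
      + fa_scale a (fa_mult u (fa_gen x)) \<in> Sp"
    using Sp by (intro fa.subspace_add fa.subspace_scale) auto
  then show "fa_mult u (fa_gen (scale a x)) \<in> Sp"
    by (simp add: fa_mult_diff_right fa_mult_scale_right)
qed

lemma subspace_fa_mult_gen_left:
  assumes Sp: "fa.subspace Sp" "hopf_rel N \<subseteq> Sp" and u: "u \<in> FA"
  shows "subspace {y. fa_mult (fa_gen y) u \<in> Sp}"
proof -
  have "{y. fa_mult (fa_gen y) u \<in> Sp} = {y. fa_mult u (fa_gen y) \<in> Sp}"
    using fa_mult_swap_mem[OF Sp] u by auto
  then show ?thesis
    using subspace_fa_mult_gen_right[OF Sp u] by simp
qed

end

lemma ev_hopf_rel_zero: "u \<in> hopf_rel {0} \<Longrightarrow> ev u = 0"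
proof -
  have "fa.subspace {c \<in> FA. ev c = 0}"
    unfolding fa.subspace_def by (auto simp: ev_add ev_scale)
  moreover have "{fa_mult r a | r a. r \<in> ev_preimage {0} \<and> a \<in> FA} \<union> lie_rel_ideal
      \<subseteq> {c \<in> FA. ev c = 0}"
    by (auto simp: ev_preimage_def ev_mult FA_lie_rel_ideal ev_lie_rel_ideal)
  ultimately show "u \<in> hopf_rel {0} \<Longrightarrow> ev u = 0"
    unfolding hopf_rel_def using fa.span_minimal by blast
qed

lemma schur_dim_eq:
  assumes "quot_dim (ev_preimage {0} \<inter> fa_sq) (hopf_rel {0}) d"
  shows "schur_dim scale br = d"
proof -
  have "pres_kernel scale br = ev_preimage {0}"
    by (auto simp: pres_kernel_def ev_preimage_def)
  moreover have "fa_span ({fa_mult r a | r a. r \<in> ev_preimage {0} \<and> a \<in> FA} \<union> lie_rel_ideal)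
      = hopf_rel {0}"
    by (simp add: fa_span_eq_span hopf_rel_def)
  ultimately show ?thesis
    unfolding schur_dim_def using the_quot_dim[OF subspace_hopf_rel assms] by simp
qed

end

section \<open>An upper bound for nilpotent Lie algebras\<close>

lemma (in vector_space) subspace_eq_UNIV_if_spanning:
  assumes "span G = UNIV" "subspace Y" "G \<subseteq> Y"
  shows "Y = UNIV"
  using span_minimal[OF assms(3,2)] assms(1) by auto

lemma fa_span_Un_mono:
  assumes "A \<subseteq> fa.span B"
  shows "fa.span (C \<union> A) \<subseteq> fa.span (C \<union> B)"
  using assms fa.span_mono[of B "C \<union> B"] fa.span_superset[of "C \<union> B"]
  by (intro fa.span_minimal) auto

lemma finite_ordered_pairs: "finite {p :: nat \<times> nat. fst p < snd p \<and> snd p < k}"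
  by (rule finite_subset[of _ "{..<k} \<times> {..<k}"]) auto

lemma card_ordered_pairs: "card {p :: nat \<times> nat. fst p < snd p \<and> snd p < k} = k * (k - 1) div 2"
proof (induction k)
  case (Suc k)
  have eq: "{p :: nat \<times> nat. fst p < snd p \<and> snd p < Suc k} =
      {p. fst p < snd p \<and> snd p < k} \<union> (\<lambda>i. (i, k)) ` {..<k}"
    by (auto simp: less_Suc_eq image_iff)
  have "card {p :: nat \<times> nat. fst p < snd p \<and> snd p < Suc k} = k * (k - 1) div 2 + k"
    unfolding eq using Suc finite_ordered_pairs[of k] by (subst card_Un_disjoint) (auto simp: card_image inj_on_def)
  also have "\<dots> = Suc k * (Suc k - 1) div 2"
    by (cases k) (auto simp: algebra_simps)
  finally show ?case .
qed simp

context lie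
begin

abbreviation L2 :: "'v set" where
  "L2 \<equiv> derived scale br"

definition lie_ideal :: "'v set \<Rightarrow> bool" where
  "lie_ideal N \<longleftrightarrow> subspace N \<and> (\<forall>x y. y \<in> N \<longrightarrow> br x y \<in> N)"

lemma subspace_derived: "subspace L2"
  unfolding derived_def by simp

lemma br_in_derived: "br x y \<in> L2"
  unfolding derived_def by (rule span_base) blast

lemma derived_subset: "subspace Y \<Longrightarrow> (\<And>x y. br x y \<in> Y) \<Longrightarrow> L2 \<subseteq> Y"
  unfolding derived_def by (intro span_minimal) auto

lemma fa_sq_subset_FA: "fa_sq \<subseteq> FA"
  unfolding fa_sq_eq_span by (rule span_subset_FA) auto

lemma fa_mult_in_fa_sq: "a \<in> FA \<Longrightarrow> b \<in> FA \<Longrightarrow> fa_mult a b \<in> fa_sq"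
  unfolding fa_sq_eq_span by (rule fa.span_base) blast

lemma fa_sq_subset_if_spanning_products:
  assumes N: "subspace N" and Sp: "fa.subspace Sp" "hopf_rel N \<subseteq> Sp"
    and G: "span G = UNIV"
    and prod: "\<And>x y. x \<in> G \<Longrightarrow> y \<in> G \<Longrightarrow> fa_mult (fa_gen x) (fa_gen y) \<in> Sp"
  shows "fa_sq \<subseteq> Sp"
proof -
  have gen_left: "fa_mult (fa_gen x) (fa_gen y) \<in> Sp" if "y \<in> G" for x y
  proof -
    have "{x. fa_mult (fa_gen x) (fa_gen y) \<in> Sp} = UNIV"
      by (rule subspace_eq_UNIV_if_spanning[OF G subspace_fa_mult_gen_left[OF N Sp FA_gen]])
        (use prod that in auto)
    then show ?thesis
      by auto
  qed
  have gen: "fa_mult (fa_gen x) (fa_gen y) \<in> Sp" for x y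
  proof -
    have "{y. fa_mult (fa_gen x) (fa_gen y) \<in> Sp} = UNIV"
      by (rule subspace_eq_UNIV_if_spanning[OF G subspace_fa_mult_gen_right[OF N Sp FA_gen]])
        (use gen_left in auto)
    then show ?thesis
      by auto
  qed
  show ?thesis
    unfolding fa_sq_eq_span
  proof (rule fa.span_minimal[OF _ Sp(1)], clarify)
    fix a b :: "('v, 'f) fa" assume ab: "a \<in> FA" "b \<in> FA"
    have "(fa_mult a b - fa_mult (fa_gen (ev a)) (fa_gen (ev b)))
        + fa_mult (fa_gen (ev a)) (fa_gen (ev b)) \<in> Sp"
      using fa_mult_diff_gen_in_hopf_rel[OF N ab] Sp gen by (intro fa.subspace_add) auto
    then show "fa_mult a b \<in> Sp"
      by simp
  qed
qed

lemma fa_sq_subset_mod_derived: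
  fixes f :: "nat \<Rightarrow> 'v"
  assumes X: "span (f ` {..<k} \<union> L2) = UNIV"
  defines "T \<equiv> (\<lambda>p. fa_mult (fa_gen (f (fst p))) (fa_gen (f (snd p)))) `
      {p. fst p < snd p \<and> snd p < k}"
  shows "fa_sq \<subseteq> fa.span (T \<union> hopf_rel L2)"
proof (rule fa_sq_subset_if_spanning_products[OF subspace_derived _ _ X])
  let ?Sp = "fa.span (T \<union> hopf_rel L2)"
  show Sp: "fa.subspace ?Sp" "hopf_rel L2 \<subseteq> ?Sp"
    using fa.span_superset[of "T \<union> hopf_rel L2"] by auto
  have T: "T \<subseteq> ?Sp"
    using fa.span_superset[of "T \<union> hopf_rel L2"] by auto
  have ordered: "fa_mult (fa_gen (f i)) (fa_gen (f j)) \<in> ?Sp" if "i < k" "j < k" for i j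
  proof (cases i j rule: linorder_cases)
    case less
    then show ?thesis
      using T that unfolding T_def by (auto intro!: image_eqI[of _ _ "(i, j)"])
  next
    case equal
    have "fa_mult (fa_gen (f i)) (fa_gen (f i)) \<in> hopf_rel L2"
      by (intro lie_rel_ideal_in_hopf_rel lie_rel_ideal.alt FA_gen)
    then show ?thesis
      using equal Sp by auto
  next
    case greater
    then have "fa_mult (fa_gen (f j)) (fa_gen (f i)) \<in> ?Sp"
      using T that unfolding T_def by (auto intro!: image_eqI[of _ _ "(j, i)"])
    then show ?thesis
      by (rule fa_mult_swap_mem[OF Sp FA_gen FA_gen])
  qed
  show "fa_mult (fa_gen x) (fa_gen y) \<in> ?Sp" if "x \<in> f ` {..<k} \<union> L2" "y \<in> f ` {..<k} \<union> L2" for x y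
  proof (cases "x \<in> L2 \<or> y \<in> L2")
    case True
    then have "fa_mult (fa_gen x) (fa_gen y) \<in> hopf_rel L2"
      by (auto intro: mult_ev_preimage_left mult_ev_preimage_right fa_gen_in_ev_preimage)
    then show ?thesis
      using Sp by auto
  next
    case False
    then show ?thesis
      using that ordered by auto
  qed
qed

text \<open>By the Jacobi identity, \<open>z(xy) \<equiv> -x(yz) - y(zx)\<close> modulo \<open>I\<close>, and both summands lie in
  \<open>hopf_rel N\<close> because \<open>[y, z]\<close> and \<open>[z, x]\<close> lie in \<open>N\<close>.\<close>

lemma fa_mult_gen_br_in_hopf_rel:
  assumes N: "subspace N" and zx: "br z x \<in> N" and zy: "br z y \<in> N"
  shows "fa_mult (fa_gen z) (fa_gen (br x y)) \<in> hopf_rel N"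
proof -
  let ?x = "fa_gen x" and ?y = "fa_gen y" and ?z = "fa_gen z"
  have "br y z \<in> N"
    using zy br_anticomm[of y z] N by (simp add: subspace_neg)
  then have yz: "fa_mult ?x (fa_mult ?y ?z) \<in> hopf_rel N"
    by (intro mult_ev_preimage_right) (auto simp: ev_preimage_def ev_mult)
  have zx: "fa_mult ?y (fa_mult ?z ?x) \<in> hopf_rel N"
    using zx by (intro mult_ev_preimage_right) (auto simp: ev_preimage_def ev_mult)
  have jacobi: "fa_mult ?x (fa_mult ?y ?z) + fa_mult ?y (fa_mult ?z ?x) + fa_mult ?z (fa_mult ?x ?y)
      \<in> hopf_rel N"
    by (rule jacobi_in_hopf_rel) auto
  have "fa_mult ?z (fa_gen (br x y) - fa_mult ?x ?y) \<in> hopf_rel N"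
    by (rule mult_ev_preimage_right[OF fa_gen_br_in_ev_preimage[OF N]]) auto
  then have "fa_mult ?x (fa_mult ?y ?z) + fa_mult ?y (fa_mult ?z ?x) + fa_mult ?z (fa_mult ?x ?y)
      - fa_mult ?x (fa_mult ?y ?z) - fa_mult ?y (fa_mult ?z ?x)
      + fa_mult ?z (fa_gen (br x y) - fa_mult ?x ?y) \<in> hopf_rel N"
    using hopf_rel_add[OF hopf_rel_diff[OF hopf_rel_diff[OF jacobi yz] zx]] by blast
  then show ?thesis
    by (simp add: fa_mult_diff_right)
qed

lemma hopf_rel_insert_subset:
  assumes N: "subspace N" and Sp: "fa.subspace Sp" "hopf_rel N \<subseteq> Sp"
    and z: "\<And>y. fa_mult (fa_gen z) (fa_gen y) \<in> Sp"
  shows "hopf_rel (span (insert z N)) \<subseteq> Sp"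
  unfolding hopf_rel_def
proof (rule fa.span_minimal[OF _ Sp(1)], rule Un_least)
  show "lie_rel_ideal \<subseteq> Sp"
    using Sp(2) lie_rel_ideal_in_hopf_rel by auto
  show "{fa_mult r a |r a. r \<in> ev_preimage (span (insert z N)) \<and> a \<in> FA} \<subseteq> Sp"
  proof clarify
    fix r a :: "('v, 'f) fa" assume r: "r \<in> ev_preimage (span (insert z N))" and a: "a \<in> FA"
    obtain l where "ev r - scale l z \<in> span N"
      using r by (auto simp: ev_preimage_def span_breakdown_eq)
    then have "ev r - scale l z \<in> N"
      using span_minimal[OF order.refl N] by blast
    then have r_l: "r - fa_scale l (fa_gen z) \<in> ev_preimage N"
      using r by (simp add: ev_preimage_def ev_diff ev_scale)
    have "fa_mult (fa_gen z) (a - fa_gen (ev a)) + fa_mult (fa_gen z) (fa_gen (ev a)) \<in> Sp"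
      using mult_ev_preimage_right[OF diff_fa_gen_ev_in_ev_preimage[OF N a]] Sp z
      by (intro fa.subspace_add) auto
    then have "fa_mult (r - fa_scale l (fa_gen z)) a + fa_scale l (fa_mult (fa_gen z) a) \<in> Sp"
      using mult_ev_preimage_left[OF r_l a] Sp
      by (intro fa.subspace_add fa.subspace_scale) (auto simp: fa_mult_diff_right)
    then show "fa_mult r a \<in> Sp"
      by (simp add: fa_mult_diff_left fa_mult_scale_left)
  qed
qed

lemma hopf_rel_insert_central:
  assumes N: "subspace N" and z: "\<And>y. br y z \<in> N" and X: "span (X \<union> L2) = UNIV"
  shows "hopf_rel (span (insert z N))
    \<subseteq> fa.span ((\<lambda>x. fa_mult (fa_gen z) (fa_gen x)) ` X \<union> hopf_rel N)"
proof (rule hopf_rel_insert_subset[OF N])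
  let ?Sp = "fa.span ((\<lambda>x. fa_mult (fa_gen z) (fa_gen x)) ` X \<union> hopf_rel N)"
  show Sp: "fa.subspace ?Sp" "hopf_rel N \<subseteq> ?Sp"
    using fa.span_superset[of "(\<lambda>x. fa_mult (fa_gen z) (fa_gen x)) ` X \<union> hopf_rel N"] by auto
  have zx: "br z x \<in> N" for x
    using z[of x] br_anticomm[of z x] N by (simp add: subspace_neg)
  have Y: "subspace {y. fa_mult (fa_gen z) (fa_gen y) \<in> ?Sp}"
    by (rule subspace_fa_mult_gen_right[OF N Sp FA_gen])
  have "L2 \<subseteq> {y. fa_mult (fa_gen z) (fa_gen y) \<in> ?Sp}"
    by (rule derived_subset[OF Y]) (use fa_mult_gen_br_in_hopf_rel[OF N zx zx] Sp(2) in auto)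
  moreover have "X \<subseteq> {y. fa_mult (fa_gen z) (fa_gen y) \<in> ?Sp}"
    by (auto intro!: fa.span_base)
  ultimately have "{y. fa_mult (fa_gen z) (fa_gen y) \<in> ?Sp} = UNIV"
    by (intro subspace_eq_UNIV_if_spanning[OF X Y]) auto
  then show "fa_mult (fa_gen z) (fa_gen y) \<in> ?Sp" for y
    by auto
qed

lemma hopf_rel_insert_bracket:
  assumes N: "subspace N" and L: "L2 \<subseteq> span (insert (br a b) N)"
  shows "hopf_rel (span (insert (br a b) N)) \<subseteq>
    fa.span ({fa_mult (fa_gen (br a b)) (fa_gen a), fa_mult (fa_gen (br a b)) (fa_gen b)} \<union> hopf_rel N)"
proof (rule hopf_rel_insert_subset[OF N])
  let ?z = "fa_gen (br a b)"
  let ?Sp = "fa.span ({fa_mult ?z (fa_gen a), fa_mult ?z (fa_gen b)} \<union> hopf_rel N)"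
  show Sp: "fa.subspace ?Sp" "hopf_rel N \<subseteq> ?Sp"
    using fa.span_superset[of "{fa_mult ?z (fa_gen a), fa_mult ?z (fa_gen b)} \<union> hopf_rel N"]
    by auto
  have Y: "subspace {y. fa_mult ?z (fa_gen y) \<in> ?Sp}"
    by (rule subspace_fa_mult_gen_right[OF N Sp FA_gen])
  show "fa_mult ?z (fa_gen y) \<in> ?Sp" for y
  proof -
    obtain \<alpha> \<beta> where \<alpha>: "br y a - scale \<alpha> (br a b) \<in> N"
      and \<beta>: "br y b - scale \<beta> (br a b) \<in> N"
      using L br_in_derived N by (metis span_breakdown_eq span_eq_iff subsetD)
    text \<open>Correcting \<open>y\<close> by multiples of \<open>a\<close> and \<open>b\<close> makes it centralize \<open>a\<close> and \<open>b\<close>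
      modulo \<open>N\<close>.\<close>
    define y' where "y' = y + scale \<alpha> b - scale \<beta> a"
    have "br y' a = br y a - scale \<alpha> (br a b)" "br y' b = br y b - scale \<beta> (br a b)"
      unfolding y'_def
      by (simp_all add: br_add_left br_diff_left br_scale_left br_self br_anticomm[of b a])
    then have "br y' a \<in> N" "br y' b \<in> N"
      using \<alpha> \<beta> by simp_all
    then have "fa_mult (fa_gen y') ?z \<in> hopf_rel N"
      by (rule fa_mult_gen_br_in_hopf_rel[OF N])
    then have "y' \<in> {y. fa_mult ?z (fa_gen y) \<in> ?Sp}"
      using fa_mult_swap_mem[OF Sp FA_gen FA_gen] Sp(2) by auto
    moreover have "a \<in> {y. fa_mult ?z (fa_gen y) \<in> ?Sp}" "b \<in> {y. fa_mult ?z (fa_gen y) \<in> ?Sp}"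
      by (auto intro!: fa.span_base)
    ultimately have "y' - scale \<alpha> b + scale \<beta> a \<in> {y. fa_mult ?z (fa_gen y) \<in> ?Sp}"
      using Y by (metis subspace_add subspace_diff subspace_scale)
    then show ?thesis
      unfolding y'_def by simp
  qed
qed

lemma nilpotent_lcs_subset:
  assumes nil: "nilpotent_lie scale br" and N: "subspace N"
  shows "\<exists>j. lcs scale br (Suc (Suc j)) \<subseteq> N"
proof -
  obtain k0 where k0: "lcs scale br k0 = {0}"
    using nil unfolding nilpotent_lie_def by blast
  show ?thesis
  proof (cases "k0 \<ge> 2")
    case True
    then obtain j where "k0 = Suc (Suc j)"
      by (metis add_2_eq_Suc le_Suc_ex)
    then have "lcs scale br (Suc (Suc j)) \<subseteq> N"
      using k0 subspace_0[OF N] by (simp del: lcs.simps)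
    then show ?thesis ..
  next
    case False
    then have "k0 = 0 \<or> k0 = Suc 0"
      by arith
    then have "lcs scale br k0 = UNIV"
      by (elim disjE) simp_all
    then have "(UNIV :: 'v set) = {0}"
      using k0 by metis
    then have "lcs scale br (Suc (Suc 0)) \<subseteq> N"
      using subspace_0[OF N] by (metis UNIV_I singletonD subsetI)
    then show ?thesis ..
  qed
qed

text \<open>The witness is taken from the last term of the lower central series that is not
  contained in \<open>N\<close>.\<close>

lemma nilpotent_exists_central_mod:
  assumes nil: "nilpotent_lie scale br" and N: "subspace N" and L: "\<not> L2 \<subseteq> N"
  shows "\<exists>z. z \<in> L2 \<and> z \<notin> N \<and> (\<forall>y. br y z \<in> N)"
proof -
  define Q where "Q j \<longleftrightarrow> lcs scale br (Suc (Suc j)) \<subseteq> N" for j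
  define j where "j = (LEAST j. Q j)"
  have Qj: "Q j"
    unfolding j_def Q_def using nilpotent_lcs_subset[OF nil N] by (rule LeastI_ex)
  moreover have "lcs scale br (Suc (Suc 0)) = L2"
    unfolding derived_def by simp
  ultimately obtain i where i: "j = Suc i"
    using L unfolding Q_def by (cases j) auto
  have "\<not> Q i"
    using not_less_Least[of i Q] i unfolding j_def[symmetric] by simp
  then obtain z where z: "z \<in> lcs scale br (Suc (Suc i))" "z \<notin> N"
    unfolding Q_def by blast
  have "br y z \<in> lcs scale br (Suc (Suc j))" for y
    unfolding i lcs.simps(3)[of scale br "Suc i"] by (rule span_base) (use z in blast)
  moreover have "lcs scale br (Suc (Suc i)) \<subseteq> L2"
    unfolding derived_def lcs.simps by (rule span_mono) blast
  ultimately show ?thesis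
    using z Qj unfolding Q_def by blast
qed

end

locale fin_dim_lie = lie scale br + finite_dimensional_vector_space scale Basis
  for scale :: "'f::field \<Rightarrow> 'v::ab_group_add \<Rightarrow> 'v" and br and Basis
begin

lemma dim_span_insert:
  assumes "subspace N" "z \<notin> N"
  shows "dim (span (insert z N)) = dim N + 1"
proof -
  have "z \<notin> span N"
    using assms by (metis span_eq_iff)
  then show ?thesis
    by (simp add: dim_insert)
qed

lemma fa_sq_subset_mod_codim_one:
  fixes f :: "nat \<Rightarrow> 'v"
  assumes X: "span (f ` {..<k} \<union> L2) = UNIV"
    and N: "subspace N" "N \<subseteq> L2" "dim N + 1 = dim L2"
  shows "\<exists>T. finite T \<and> card T \<le> k * (k - 1) div 2 + 2 \<and> fa_sq \<subseteq> fa.span (T \<union> hopf_rel N)"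
proof -
  have "\<not> L2 \<subseteq> N"
    using dim_subset[of L2 N] N(3) by linarith
  then obtain a b where ab: "br a b \<notin> N"
    using derived_subset[OF N(1)] by blast
  let ?N' = "span (insert (br a b) N)"
  have "?N' \<subseteq> L2"
    using N(2) br_in_derived subspace_derived by (intro span_minimal) auto
  then have N': "?N' = L2"
    using subspace_derived dim_span_insert[OF N(1) ab] N(3) by (intro subspace_dim_equal) auto
  define T :: "('v, 'f) fa set" where "T = (\<lambda>p. fa_mult (fa_gen (f (fst p))) (fa_gen (f (snd p)))) `
      {p. fst p < snd p \<and> snd p < k}"
  define T' :: "('v, 'f) fa set" where "T' = {fa_mult (fa_gen (br a b)) (fa_gen a), fa_mult (fa_gen (br a b)) (fa_gen b)}"
  have "fa_sq \<subseteq> fa.span (T \<union> hopf_rel ?N')"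
    unfolding N' T_def by (rule fa_sq_subset_mod_derived[OF X])
  also have "\<dots> \<subseteq> fa.span (T \<union> (T' \<union> hopf_rel N))"
    unfolding T'_def by (rule fa_span_Un_mono[OF hopf_rel_insert_bracket[OF N(1) equalityD2[OF N']]])
  finally have "fa_sq \<subseteq> fa.span ((T \<union> T') \<union> hopf_rel N)"
    by (simp only: Un_assoc)
  moreover have "card (T \<union> T') \<le> k * (k - 1) div 2 + 2"
  proof -
    have "card T \<le> k * (k - 1) div 2"
      unfolding T_def card_ordered_pairs[symmetric] by (rule card_image_le[OF finite_ordered_pairs])
    moreover have "card T' \<le> 2"
      by (simp add: T'_def card_insert_le_m1)
    ultimately show ?thesis
      using card_Un_le[of T T'] by linarith
  qed
  moreover have "finite (T \<union> T')"
    using finite_ordered_pairs by (simp add: T_def T'_def)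
  ultimately show ?thesis
    by blast
qed

lemma hopf_rel_central_step:
  fixes f :: "nat \<Rightarrow> 'v"
  assumes nil: "nilpotent_lie scale br" and X: "span (f ` {..<k} \<union> L2) = UNIV"
    and N: "lie_ideal N" "N \<subseteq> L2" "\<not> L2 \<subseteq> N"
  obtains N' T where "lie_ideal N'" "N' \<subseteq> L2" "dim N' = dim N + 1"
    "finite T" "card T \<le> k" "hopf_rel N' \<subseteq> fa.span (T \<union> hopf_rel N)"
proof -
  have sub: "subspace N" and ideal: "\<And>x y. y \<in> N \<Longrightarrow> br x y \<in> N"
    using N(1) unfolding lie_ideal_def by auto
  obtain z where z: "z \<in> L2" "z \<notin> N" "\<And>y. br y z \<in> N"
    using nilpotent_exists_central_mod[OF nil sub N(3)] by blast
  let ?N' = "span (insert z N)"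
  have "lie_ideal ?N'"
    unfolding lie_ideal_def
  proof (intro conjI allI impI subspace_span)
    fix x y assume "y \<in> ?N'"
    then obtain l where "y - scale l z \<in> span N"
      by (auto simp: span_breakdown_eq)
    then have "br x (y - scale l z) \<in> ?N'" "br x z \<in> ?N'"
      using ideal span_minimal[OF order.refl sub] z(3) span_superset[of "insert z N"] by blast+
    then have "br x (y - scale l z) + scale l (br x z) \<in> ?N'"
      by (intro span_add span_scale)
    then show "br x y \<in> ?N'"
      by (simp add: br_diff_right br_scale_right)
  qed
  moreover have "?N' \<subseteq> L2"
    using N(2) z(1) subspace_derived by (intro span_minimal) auto
  moreover have "card ((\<lambda>x. fa_mult (fa_gen z) (fa_gen x) :: ('v, 'f) fa) ` f ` {..<k}) \<le> k"
    using card_image_le[of "f ` {..<k}" "\<lambda>x. fa_mult (fa_gen z) (fa_gen x) :: ('v, 'f) fa"]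
      card_image_le[of "{..<k}" f] by simp
  ultimately show ?thesis
    using that dim_span_insert[OF sub z(2)] hopf_rel_insert_central[OF sub z(3) X] by blast
qed

lemma fa_sq_subset_mod_lie_ideal:
  fixes f :: "nat \<Rightarrow> 'v"
  assumes nil: "nilpotent_lie scale br" and X: "span (f ` {..<k} \<union> L2) = UNIV"
  shows "lie_ideal N \<Longrightarrow> N \<subseteq> L2 \<Longrightarrow> dim N + 1 + j = dim L2 \<Longrightarrow>
    \<exists>T. finite T \<and> card T \<le> k * (k - 1) div 2 + 2 + j * k \<and> fa_sq \<subseteq> fa.span (T \<union> hopf_rel N)"
proof (induction j arbitrary: N)
  case 0
  then show ?case
    using fa_sq_subset_mod_codim_one[OF X] unfolding lie_ideal_def by simp
next
  case (Suc j)
  have "\<not> L2 \<subseteq> N"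
    using dim_subset[of L2 N] Suc.prems(3) by linarith
  then obtain N' T' where N': "lie_ideal N'" "N' \<subseteq> L2" "dim N' = dim N + 1"
    and T': "finite T'" "card T' \<le> k" "hopf_rel N' \<subseteq> fa.span (T' \<union> hopf_rel N)"
    using hopf_rel_central_step[OF nil X Suc.prems(1,2)] by blast
  obtain T where T: "finite T" "card T \<le> k * (k - 1) div 2 + 2 + j * k"
    "fa_sq \<subseteq> fa.span (T \<union> hopf_rel N')"
    using Suc.IH[OF N'(1,2)] N'(3) Suc.prems(3) by auto
  have "fa_sq \<subseteq> fa.span ((T \<union> T') \<union> hopf_rel N)"
    using T(3) fa_span_Un_mono[OF T'(3), of T] by (auto simp: Un_assoc)
  moreover have "card (T \<union> T') \<le> k * (k - 1) div 2 + 2 + Suc j * k"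
    using card_Un_le[of T T'] T(2) T'(2) by simp
  ultimately show ?case
    using T(1) T'(1) by blast
qed

lemma subspace_fa_sq: "fa.subspace fa_sq"
  unfolding fa_sq_eq_span by (rule fa.subspace_span)

lemma derived_subset_ev_fa_sq: "L2 \<subseteq> ev ` fa_sq"
proof (rule derived_subset)
  show "subspace (ev ` fa_sq)"
    unfolding subspace_def
  proof (intro conjI ballI allI)
    show "0 \<in> ev ` fa_sq"
      using fa.subspace_0[OF subspace_fa_sq] by (auto intro!: image_eqI[of _ _ 0])
  next
    fix x y assume "x \<in> ev ` fa_sq" "y \<in> ev ` fa_sq"
    then obtain p q where "p \<in> fa_sq" "q \<in> fa_sq" "x = ev p" "y = ev q"
      by blast
    moreover have "p \<in> FA" "q \<in> FA"
      using calculation fa_sq_subset_FA by auto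
    ultimately show "x + y \<in> ev ` fa_sq"
      using fa.subspace_add[OF subspace_fa_sq] by (intro image_eqI[of _ _ "p + q"]) (auto simp: ev_add)
  next
    fix a x assume "x \<in> ev ` fa_sq"
    then obtain p where "p \<in> fa_sq" "x = ev p"
      by blast
    moreover have "p \<in> FA"
      using calculation fa_sq_subset_FA by auto
    ultimately show "scale a x \<in> ev ` fa_sq"
      using fa.subspace_scale[OF subspace_fa_sq]
      by (intro image_eqI[of _ _ "fa_scale a p"]) (auto simp: ev_scale)
  qed
  show "br x y \<in> ev ` fa_sq" for x y
    using fa_mult_in_fa_sq[OF FA_gen FA_gen]
    by (intro image_eqI[of _ _ "fa_mult (fa_gen x) (fa_gen y)"]) (auto simp: ev_mult)
qed

lemma exists_fa_sq_lift_of_derived_basis: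
  obtains P where "finite P" "P \<subseteq> fa_sq" "card P = dim L2" "inj_on ev P" "independent (ev ` P)"
proof -
  obtain B where B: "B \<subseteq> L2" "independent B" "L2 \<subseteq> span B" "card B = dim L2"
    using basis_exists[of L2] by metis
  have "\<forall>y\<in>B. \<exists>p. p \<in> fa_sq \<and> ev p = y"
    using B(1) derived_subset_ev_fa_sq by blast
  then obtain p where p: "\<And>y. y \<in> B \<Longrightarrow> p y \<in> fa_sq" "\<And>y. y \<in> B \<Longrightarrow> ev (p y) = y"
    by metis
  have "inj_on p B"
    by (rule inj_onI) (metis p(2))
  moreover have "ev ` p ` B = B"
    using p(2) by force
  moreover have "inj_on ev (p ` B)"
    using p(2) by (auto simp: inj_on_def)
  ultimately show ?thesis
    using that[of "p ` B"] B(2,4) p(1) finiteI_independent[OF B(2)] by (auto simp: card_image)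
qed

lemma independent_mod_Un_lift:
  assumes S: "finite S" "S \<subseteq> ev_preimage {0}" "independent_mod (hopf_rel {0}) S"
    and P: "P \<subseteq> FA" "inj_on ev P" "independent (ev ` P)"
  shows "S \<inter> P = {}" and "independent_mod (hopf_rel {0}) (S \<union> P)"
proof -
  have finP: "finite P"
    using finiteI_independent[OF P(3)] P(2) finite_imageD by blast
  show disj: "S \<inter> P = {}"
    using S(2) P(3) dependent_zero by (force simp: ev_preimage_def)
  show "independent_mod (hopf_rel {0}) (S \<union> P)"
    unfolding independent_mod_def
  proof (intro allI impI)
    fix c assume c: "(\<Sum>u\<in>S \<union> P. fa_scale (c u) u) \<in> hopf_rel {0}"
    have SP_FA: "S \<union> P \<subseteq> FA"
      using S(2) P(1) by (auto simp: ev_preimage_def)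
    have "(\<Sum>v\<in>ev ` P. scale (c (the_inv_into P ev v)) v) = (\<Sum>u\<in>P. scale (c u) (ev u))"
      using P(2) by (simp add: sum.reindex the_inv_into_f_f)
    also have "\<dots> = (\<Sum>u\<in>S \<union> P. scale (c u) (ev u))"
    proof -
      have "(\<Sum>u\<in>S. scale (c u) (ev u)) = 0"
        using S(2) by (intro sum.neutral) (auto simp: ev_preimage_def)
      then show ?thesis
        by (simp add: sum.union_disjoint[OF S(1) finP disj])
    qed
    also have "\<dots> = ev (\<Sum>u\<in>S \<union> P. fa_scale (c u) u)"
      using SP_FA by (subst ev_sum) (auto intro!: sum.cong ev_scale[symmetric])
    also have "\<dots> = 0"
      using ev_hopf_rel_zero[OF c] .
    finally have "\<forall>v\<in>ev ` P. c (the_inv_into P ev v) = 0"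
      using P(3) unfolding independent_explicit by (blast dest: spec[of _ "\<lambda>v. c (the_inv_into P ev v)"])
    then have cP: "\<forall>u\<in>P. c u = 0"
      using P(2) by (auto simp: the_inv_into_f_f)
    then have "(\<Sum>u\<in>S. fa_scale (c u) u) \<in> hopf_rel {0}"
      using c by (simp add: sum.union_disjoint[OF S(1) finP disj])
    then show "\<forall>u\<in>S \<union> P. c u = 0"
      using S(3) cP unfolding independent_mod_def by blast
  qed
qed

lemma quot_dim_add_dim_derived_le:
  assumes q: "quot_dim (ev_preimage {0} \<inter> fa_sq) (hopf_rel {0}) d" and T: "finite T"
    and sq: "fa_sq \<subseteq> fa.span (T \<union> hopf_rel {0})"
  shows "d + dim L2 \<le> card T"
proof -
  obtain S where S: "finite S" "card S = d" "S \<subseteq> ev_preimage {0} \<inter> fa_sq"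
    "independent_mod (hopf_rel {0}) S"
    using q unfolding quot_dim_iff by blast
  obtain P where P: "finite P" "P \<subseteq> fa_sq" "card P = dim L2" "inj_on ev P" "independent (ev ` P)"
    by (rule exists_fa_sq_lift_of_derived_basis)
  have "P \<subseteq> FA"
    using P(2) fa_sq_subset_FA by auto
  then have disj: "S \<inter> P = {}" and indep: "independent_mod (hopf_rel {0}) (S \<union> P)"
    using independent_mod_Un_lift[OF S(1) _ S(4) _ P(4,5)] S(3) by auto
  have "card (S \<union> P) \<le> card T"
    using S(1,3) P(1,2) sq by (intro independent_mod_card_le[OF subspace_hopf_rel T _ _ indep]) auto
  then show ?thesis
    using card_Un_disjoint[OF S(1) P(1) disj] S(2) P(3) by simp
qed

lemma exists_complement_of_derived:
  obtains f :: "nat \<Rightarrow> 'v" where "span (f ` {..<dim (UNIV :: 'v set) - dim L2} \<union> L2) = UNIV"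
proof -
  obtain B2 where B2: "B2 \<subseteq> L2" "independent B2" "L2 \<subseteq> span B2" "card B2 = dim L2"
    using basis_exists[of L2] by metis
  define B where "B = extend_basis B2"
  have B: "B2 \<subseteq> B" "independent B" "span B = UNIV"
    unfolding B_def using extend_basis_superset independent_extend_basis span_extend_basis B2(2)
    by auto
  have "finite B"
    using finiteI_independent[OF B(2)] .
  moreover have "card B = dim (UNIV :: 'v set)"
    using basis_card_eq_dim[of B UNIV] B by auto
  ultimately have "card (B - B2) = dim (UNIV :: 'v set) - dim L2"
    using card_Diff_subset[OF finite_subset[OF B(1)] B(1)] B2(4) by simp
  then obtain f where f: "f ` {..<dim (UNIV :: 'v set) - dim L2} = B - B2"
    using ex_bij_betw_nat_finite[of "B - B2"] \<open>finite B\<close>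
    by (auto simp: bij_betw_def atLeast0LessThan)
  have "span B \<subseteq> span ((B - B2) \<union> L2)"
    using B2(1) by (intro span_mono) auto
  then show ?thesis
    using that[of f] f B(3) by auto
qed

lemma quot_dim_upper_bound:
  assumes nil: "nilpotent_lie scale br" and L2: "dim L2 \<ge> 1"
    and q: "quot_dim (ev_preimage {0} \<inter> fa_sq) (hopf_rel {0}) d"
  defines "k \<equiv> dim (UNIV :: 'v set) - dim L2"
  shows "d + dim L2 \<le> k * (k - 1) div 2 + 2 + (dim L2 - 1) * k"
proof -
  obtain f where f: "span (f ` {..<k} \<union> L2) = UNIV"
    unfolding k_def by (rule exists_complement_of_derived)
  have "lie_ideal {0}"
    by (simp add: lie_ideal_def subspace_single_0)
  then obtain T where T: "finite T" "card T \<le> k * (k - 1) div 2 + 2 + (dim L2 - 1) * k"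
      "fa_sq \<subseteq> fa.span (T \<union> hopf_rel {0})"
    using fa_sq_subset_mod_lie_ideal[OF nil f, of "{0}" "dim L2 - 1"] L2 subspace_0[OF subspace_derived]
    by auto
  then show ?thesis
    using quot_dim_add_dim_derived_le[OF q T(1,3)] by linarith
qed

lemma exists_quot_dim: "\<exists>d. quot_dim (ev_preimage {0} \<inter> fa_sq) (hopf_rel {0}) d"
proof -
  let ?T = "(\<lambda>p. fa_mult (fa_gen (fst p)) (fa_gen (snd p))) ` (Basis \<times> Basis)"
  let ?Sp = "fa.span (?T \<union> hopf_rel {0})"
  have Sp: "fa.subspace ?Sp" "hopf_rel {0} \<subseteq> ?Sp" "?T \<subseteq> ?Sp"
    using fa.span_superset[of "?T \<union> hopf_rel {0}"] by auto
  have "fa_sq \<subseteq> ?Sp"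
  proof (rule fa_sq_subset_if_spanning_products[OF subspace_single_0 Sp(1,2) span_Basis])
    show "fa_mult (fa_gen x) (fa_gen y) \<in> ?Sp" if "x \<in> Basis" "y \<in> Basis" for x y
    proof -
      have "fa_mult (fa_gen x) (fa_gen y) \<in> ?T"
        using that by (intro image_eqI[of _ _ "(x, y)"]) auto
      then show ?thesis
        using Sp(3) by blast
    qed
  qed
  then show ?thesis
    using finite_Basis by (intro quot_dim_exists[OF subspace_hopf_rel, of ?T]) auto
qed

end

section \<open>A lower bound when the derived algebra is one-dimensional\<close>

context lie
begin

lemma abelian_if_spanning:
  assumes B: "span B = UNIV" and br0: "\<And>x y. x \<in> B \<Longrightarrow> y \<in> B \<Longrightarrow> br x y = 0"
  shows "abelian_lie br"
proof -
  have left: "{x. br x y = 0} = UNIV" if "y \<in> B" for y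
    using that br0 by (intro subspace_eq_UNIV_if_spanning[OF B])
      (auto simp: subspace_def br_add_left br_scale_left)
  have "{y. br x y = 0} = UNIV" for x
    using left by (intro subspace_eq_UNIV_if_spanning[OF B])
      (auto simp: subspace_def br_add_right br_scale_right)
  then show ?thesis
    unfolding abelian_lie_def by auto
qed

end

context fin_dim_lie
begin

lemma derived_dim_one_central:
  assumes nil: "nilpotent_lie scale br" and L2: "dim L2 = 1"
  obtains z where "z \<noteq> 0" "L2 = span {z}" "\<And>y. br y z = 0"
proof -
  have "\<not> L2 \<subseteq> {0}"
    using L2 dim_subset[of L2 "{0}"] by auto
  then obtain z where z: "z \<in> L2" "z \<noteq> 0" "\<And>y. br y z = 0"
    using nilpotent_exists_central_mod[OF nil subspace_single_0] by auto
  have "span {z} \<subseteq> L2"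
    using z(1) subspace_derived by (intro span_minimal) auto
  then have "span {z} = L2"
    using L2 z(2) subspace_derived by (intro subspace_dim_equal) (auto simp: dim_span dim_insert)
  then show ?thesis
    by (intro that[OF z(2) _ z(3)]) simp
qed

end

interpretation scalar_field: vector_space "(*) :: 'f::field \<Rightarrow> 'f \<Rightarrow> 'f"
  by unfold_locales (auto simp: algebra_simps)

declare scalar_field.scale_scale [simp del] \<comment> \<open>it loops against associativity\<close>

abbreviation fa_functional :: "('x tm \<Rightarrow> 'f::field) \<Rightarrow> ('x, 'f) fa \<Rightarrow> 'f" where
  "fa_functional \<equiv> fa_extend (*)"

locale derived_line = fin_dim_lie scale br Basis
  for scale :: "'f::field \<Rightarrow> 'v::ab_group_add \<Rightarrow> 'v" and br Basis +
  fixes z :: 'v and B :: "'v set" and f :: "nat \<Rightarrow> 'v" and k :: nat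
  assumes central: "\<And>y. br y z = 0"
    and derived_eq: "L2 = span {z}"
    and independent_B: "independent B" and span_B: "span B = UNIV" and z_in_B: "z \<in> B"
    and f_image: "f ` {..<k} = B - {z}" and inj_f: "inj_on f {..<k}"
begin

definition coord :: "nat \<Rightarrow> 'v \<Rightarrow> 'f" where
  "coord i v = representation B v (f i)"

definition coeff :: "nat \<Rightarrow> nat \<Rightarrow> 'f" where
  "coeff i j = representation B (br (f i) (f j)) z"

lemma coord_add: "coord i (x + y) = coord i x + coord i y"
  unfolding coord_def using representation_add[OF independent_B] span_B by simp

lemma coord_scale: "coord i (scale a x) = a * coord i x"
  unfolding coord_def using representation_scale[OF independent_B] span_B by simp

lemma coord_zero [simp]: "coord i 0 = 0"
  unfolding coord_def by (simp add: representation_zero)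

lemma coord_sum: "coord i (sum g A) = (\<Sum>a\<in>A. coord i (g a))"
  by (induction A rule: infinite_finite_induct) (auto simp: coord_add)

lemma coord_f:
  assumes "i < k" "j < k"
  shows "coord i (f j) = (if i = j then 1 else 0)"
proof -
  have "f j \<in> B"
    using f_image assms by auto
  then have "coord i (f j) = (if f i = f j then 1 else 0)"
    unfolding coord_def using representation_basis[OF independent_B] by simp
  also have "(f i = f j) \<longleftrightarrow> i = j"
    using inj_f assms by (auto simp: inj_on_def)
  finally show ?thesis .
qed

lemma coord_z: "i < k \<Longrightarrow> coord i z = 0"
  using f_image representation_basis[OF independent_B z_in_B] by (auto simp: coord_def)

lemma br_eq_scale_z: obtains c where "br x y = scale c z"
  using br_in_derived[of x y] derived_eq by (auto simp: span_singleton)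

lemma coord_br: "i < k \<Longrightarrow> coord i (br x y) = 0"
  by (cases rule: br_eq_scale_z[of x y]) (simp add: coord_scale coord_z)

lemma br_f_eq: "br (f i) (f j) = scale (coeff i j) z"
proof -
  obtain c where c: "br (f i) (f j) = scale c z"
    by (rule br_eq_scale_z)
  then have "coeff i j = c"
    using representation_scale[OF independent_B, of z c] representation_basis[OF independent_B z_in_B]
      span_B by (simp add: coeff_def)
  then show ?thesis
    using c by simp
qed

lemma exists_nonzero_coeff:
  assumes "\<not> abelian_lie br"
  obtains p q where "p < q" "q < k" "coeff p q \<noteq> 0"
proof (rule ccontr)
  assume "\<not> thesis"
  then have coeff0: "p < q \<Longrightarrow> q < k \<Longrightarrow> br (f p) (f q) = 0" for p q
    using that br_f_eq by auto
  have "br x y = 0" if "x \<in> B" "y \<in> B" for x y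
  proof (cases "x = z \<or> y = z")
    case True
    then show ?thesis
      using central[of x] central[of y] br_anticomm[of z y] by auto
  next
    case False
    then have "x \<in> f ` {..<k}" "y \<in> f ` {..<k}"
      using that f_image by auto
    then obtain i j where ij: "x = f i" "y = f j" "i < k" "j < k"
      by auto
    then show ?thesis
      using coeff0[of i j] coeff0[of j i] br_self[of x] br_anticomm[of x y]
      by (cases i j rule: linorder_cases) auto
  qed
  then show False
    using abelian_if_spanning[OF span_B] assms by blast
qed

definition coord_prod :: "nat \<Rightarrow> nat \<Rightarrow> ('v, 'f) fa \<Rightarrow> 'f" where
  "coord_prod a b = fa_functional
     (\<lambda>t. case t of Gen _ \<Rightarrow> 0 | Br s u \<Rightarrow> coord a (eval_tm br s) * coord b (eval_tm br u))"

text \<open>\<open>wedge a b\<close> applies the alternating form \<open>x\<^sub>a y\<^sub>b - x\<^sub>b y\<^sub>a\<close> to the outermost brackets;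
  it vanishes on \<open>hopf_rel {0}\<close> because the coordinates \<open>a, b < k\<close> vanish on \<open>L\<^sup>2\<close>.\<close>

definition wedge :: "nat \<Rightarrow> nat \<Rightarrow> ('v, 'f) fa \<Rightarrow> 'f" where
  "wedge a b c = coord_prod a b c - coord_prod b a c"

lemma fa_functional_coord: "fa_functional (\<lambda>t. coord a (eval_tm br t)) c = coord a (ev c)"
  by (simp add: fa_extend_def eval_fa_def fa_supp_def coord_sum coord_scale)

lemma coord_prod_mult:
  assumes "c \<in> FA" "d \<in> FA"
  shows "coord_prod a b (fa_mult c d) = coord a (ev c) * coord b (ev d)"
  unfolding coord_prod_def fa_functional_coord[symmetric]
  by (rule scalar_field.fa_extend_mult[OF assms]) (simp_all add: algebra_simps)

lemma wedge_add: "c \<in> FA \<Longrightarrow> d \<in> FA \<Longrightarrow> wedge a b (c + d) = wedge a b c + wedge a b d"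
  by (simp add: wedge_def coord_prod_def scalar_field.fa_extend_add)

lemma wedge_scale: "c \<in> FA \<Longrightarrow> wedge a b (fa_scale r c) = r * wedge a b c"
  by (simp add: wedge_def coord_prod_def scalar_field.fa_extend_scale algebra_simps)

lemma wedge_zero [simp]: "wedge a b 0 = 0"
  by (simp add: wedge_def coord_prod_def)

lemma wedge_diff: "c \<in> FA \<Longrightarrow> d \<in> FA \<Longrightarrow> wedge a b (c - d) = wedge a b c - wedge a b d"
  by (simp add: wedge_def coord_prod_def scalar_field.fa_extend_diff)

lemma wedge_sum:
  "(\<And>i. i \<in> A \<Longrightarrow> g i \<in> FA) \<Longrightarrow> wedge a b (sum g A) = (\<Sum>i\<in>A. wedge a b (g i))"
  by (simp add: wedge_def coord_prod_def scalar_field.fa_extend_sum sum_subtractf)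

lemma wedge_mult:
  "c \<in> FA \<Longrightarrow> d \<in> FA \<Longrightarrow>
    wedge a b (fa_mult c d) = coord a (ev c) * coord b (ev d) - coord b (ev c) * coord a (ev d)"
  by (simp add: wedge_def coord_prod_mult)

lemma wedge_lie_rel_ideal:
  assumes "a < k" "b < k"
  shows "u \<in> lie_rel_ideal \<Longrightarrow> wedge a b u = 0"
proof (induction rule: lie_rel_ideal.induct)
  case (jac x y w)
  then show ?case
    using assms by (simp add: wedge_add wedge_mult ev_mult coord_br)
qed (simp_all add: wedge_add wedge_scale wedge_mult FA_lie_rel_ideal ev_lie_rel_ideal)

lemma wedge_hopf_rel:
  assumes "a < k" "b < k" "u \<in> hopf_rel {0}"
  shows "wedge a b u = 0"
proof -
  have "fa.subspace {c \<in> FA. wedge a b c = 0}"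
    unfolding fa.subspace_def by (auto simp: wedge_add wedge_scale)
  moreover have "{fa_mult r x | r x. r \<in> ev_preimage {0} \<and> x \<in> FA} \<union> lie_rel_ideal
      \<subseteq> {c \<in> FA. wedge a b c = 0}"
    using wedge_lie_rel_ideal[OF assms(1,2)] by (auto simp: ev_preimage_def wedge_mult FA_lie_rel_ideal)
  ultimately show ?thesis
    using assms(3) fa.span_minimal unfolding hopf_rel_def by blast
qed

context
  fixes p q assumes pq: "p < q" "q < k" "coeff p q \<noteq> 0"
begin

definition pair_index :: "(nat \<times> nat) set" where
  "pair_index = {pr. fst pr < snd pr \<and> snd pr < k} - {(p, q)}"

definition kernel_elem :: "nat \<times> nat \<Rightarrow> ('v, 'f) fa" where
  "kernel_elem pr = fa_mult (fa_gen (f (fst pr))) (fa_gen (f (snd pr))) -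
     fa_scale (coeff (fst pr) (snd pr) / coeff p q) (fa_mult (fa_gen (f p)) (fa_gen (f q)))"

lemma kernel_elem_FA: "kernel_elem pr \<in> FA"
  by (simp add: kernel_elem_def)

lemma kernel_elem_in_fa_sq: "kernel_elem pr \<in> fa_sq"
  unfolding kernel_elem_def fa_sq_eq_span
  by (intro fa.span_diff fa.span_scale fa.span_base) (blast intro: FA_gen)+

lemma ev_kernel_elem: "ev (kernel_elem pr) = 0"
  using pq(3) by (simp add: kernel_elem_def ev_diff ev_scale ev_mult br_f_eq scale_scale)

lemma wedge_kernel_elem:
  assumes "(a, b) \<in> pair_index" "(i, j) \<in> pair_index"
  shows "wedge a b (kernel_elem (i, j)) = (if (i, j) = (a, b) then 1 else 0)"
proof -
  have ab: "a < b" "b < k" "(a, b) \<noteq> (p, q)" and ij: "i < j" "j < k"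
    using assms by (auto simp: pair_index_def)
  have "coord a (f p) * coord b (f q) - coord b (f p) * coord a (f q) = 0"
    using ab pq by (auto simp: coord_f)
  moreover have "coord a (f i) * coord b (f j) - coord b (f i) * coord a (f j)
      = (if (i, j) = (a, b) then 1 else 0)"
    using ab ij by (auto simp: coord_f)
  ultimately show ?thesis
    by (simp add: kernel_elem_def wedge_diff wedge_scale wedge_mult)
qed

lemma inj_on_kernel_elem: "inj_on kernel_elem pair_index"
proof (rule inj_onI)
  fix x y assume x: "x \<in> pair_index" and y: "y \<in> pair_index" and eq: "kernel_elem x = kernel_elem y"
  obtain a b i j where "y = (a, b)" "x = (i, j)"
    by (cases x, cases y) auto
  then show "x = y"
    using eq wedge_kernel_elem[of a b i j] wedge_kernel_elem[of a b a b] x y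
    by (auto split: if_splits)
qed

lemma card_pair_index: "card pair_index = k * (k - 1) div 2 - 1"
  using pq card_ordered_pairs[of k] finite_ordered_pairs[of k]
  by (simp add: pair_index_def card_Diff_singleton)

lemma independent_mod_kernel_elem: "independent_mod (hopf_rel {0}) (kernel_elem ` pair_index)"
  unfolding independent_mod_def
proof (intro allI impI ballI)
  fix c w assume c: "(\<Sum>s\<in>kernel_elem ` pair_index. fa_scale (c s) s) \<in> hopf_rel {0}"
    and w: "w \<in> kernel_elem ` pair_index"
  obtain a b where ab: "(a, b) \<in> pair_index" "w = kernel_elem (a, b)"
    using w by auto
  have "a < k" "b < k"
    using ab by (auto simp: pair_index_def)
  then have "0 = wedge a b (\<Sum>s\<in>kernel_elem ` pair_index. fa_scale (c s) s)"
    using wedge_hopf_rel c by simp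
  also have "\<dots> = (\<Sum>x\<in>pair_index. c (kernel_elem x) * wedge a b (kernel_elem x))"
    by (simp add: wedge_sum wedge_scale kernel_elem_FA sum.reindex[OF inj_on_kernel_elem])
  also have "\<dots> = (\<Sum>x\<in>pair_index. if x = (a, b) then c (kernel_elem (a, b)) else 0)"
    using wedge_kernel_elem[OF ab(1)] by (intro sum.cong) (auto split: if_splits)
  also have "\<dots> = c w"
    using ab finite_ordered_pairs[of k] by (simp add: pair_index_def)
  finally show "c w = 0"
    by simp
qed

lemma pairs_le_quot_dim:
  assumes "quot_dim (ev_preimage {0} \<inter> fa_sq) (hopf_rel {0}) d"
  shows "k * (k - 1) div 2 - 1 \<le> d"
proof -
  have "kernel_elem ` pair_index \<subseteq> fa.span ((ev_preimage {0} \<inter> fa_sq) \<union> hopf_rel {0})"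
    using kernel_elem_FA kernel_elem_in_fa_sq ev_kernel_elem
    by (auto simp: ev_preimage_def intro: fa.span_base)
  then have "card (kernel_elem ` pair_index) \<le> d"
    using finite_ordered_pairs[of k]
    by (intro card_le_quot_dim[OF subspace_hopf_rel assms _ _ independent_mod_kernel_elem])
      (auto simp: pair_index_def)
  then show ?thesis
    using card_image[OF inj_on_kernel_elem] card_pair_index by simp
qed

end

end

context fin_dim_lie
begin

lemma quot_dim_lower_bound:
  assumes nil: "nilpotent_lie scale br" and nab: "\<not> abelian_lie br" and L2: "dim L2 = 1"
    and q: "quot_dim (ev_preimage {0} \<inter> fa_sq) (hopf_rel {0}) d"
  obtains k where "k \<ge> 2" "dim (UNIV :: 'v set) = k + 1" "k * (k - 1) div 2 \<le> d + 1"
proof -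
  obtain z where z: "z \<noteq> 0" "L2 = span {z}" "\<And>y. br y z = 0"
    using derived_dim_one_central[OF nil L2] by blast
  have indz: "independent {z}"
    using z(1) by (simp add: independent_insert)
  define B where "B = extend_basis {z}"
  have B: "z \<in> B" "independent B" "span B = UNIV"
    unfolding B_def using extend_basis_superset[OF indz] independent_extend_basis[OF indz]
      span_extend_basis[OF indz] by auto
  have "finite B"
    using finiteI_independent[OF B(2)] .
  define k where "k = card B - 1"
  have "card B > 0"
    using B(1) \<open>finite B\<close> card_gt_0_iff by blast
  then have dim: "dim (UNIV :: 'v set) = k + 1"
    using basis_card_eq_dim[of B UNIV] B by (simp add: k_def)
  obtain f where "bij_betw f {0..<k} (B - {z})"
    using ex_bij_betw_nat_finite[of "B - {z}"] \<open>finite B\<close> B(1) by (auto simp: k_def)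
  then have f: "f ` {..<k} = B - {z}" "inj_on f {..<k}"
    by (auto simp: bij_betw_def atLeast0LessThan)
  interpret derived_line scale br Basis z B f k
    by unfold_locales (use z B f in auto)
  obtain p q where pq: "p < q" "q < k" "coeff p q \<noteq> 0"
    using exists_nonzero_coeff[OF nab] by blast
  have "k * (k - 1) div 2 - 1 \<le> d"
    by (rule pairs_le_quot_dim[OF pq q])
  moreover have "k * (k - 1) \<ge> 2 * 1"
    using pq by (intro mult_mono) auto
  ultimately show ?thesis
    using that[of k] dim pq by auto
qed

end


section \<open>The invariant \<open>s(L)\<close>\<close>

lemma two_mult_consecutive_prod_div_2: "2 * ((x - 1) * (x - 2) div 2) = (x - 1) * (x - 2 :: int)"
proof -
  have "even ((x - 2) * (x - 2 + 1))"
    by simp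
  then show ?thesis
    by (simp add: algebra_simps)
qed

lemma two_mult_pairs_div_2: "2 * (k * (k - 1) div 2) = k * (k - 1 :: nat)"
proof -
  have "even (k * (k - 1))"
    by (cases k) simp_all
  then show ?thesis
    by simp
qed

lemma s_formula_ge_6:
  fixes k m d :: nat
  assumes m: "m \<ge> 4" and d: "d + m \<le> k * (k - 1) div 2 + 2 + (m - 1) * k"
  shows "(int (k + m) - 1) * (int (k + m) - 2) div 2 + 1 - int d \<ge> 6"
proof -
  define K M where "K = int k" and "M = int m"
  have "2 * int d + 2 * M \<le> K * (K - 1) + 4 + 2 * ((M - 1) * K)"
  proof -
    have "2 * (d + m) \<le> 2 * (k * (k - 1) div 2 + 2 + (m - 1) * k)"
      using d by (rule mult_le_mono2)
    also have "\<dots> = k * (k - 1) + 4 + 2 * ((m - 1) * k)"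
      by (simp only: add_mult_distrib2 two_mult_pairs_div_2)
    finally have "2 * (d + m) \<le> k * (k - 1) + 4 + 2 * ((m - 1) * k)" .
    then have "int (2 * (d + m)) \<le> int (k * (k - 1) + 4 + 2 * ((m - 1) * k))"
      by (simp only: of_nat_le_iff)
    also have "\<dots> = K * (K - 1) + 4 + 2 * ((M - 1) * K)"
    proof -
      have "int (k * (k - 1)) = K * (K - 1)"
        by (cases k) (simp_all add: K_def algebra_simps)
      moreover have "int ((m - 1) * k) = (M - 1) * K"
        using m by (simp add: K_def M_def of_nat_diff)
      ultimately show ?thesis
        by (simp only: of_nat_add of_nat_mult of_nat_numeral)
    qed
    finally show ?thesis
      by (simp add: M_def)
  qed
  moreover have "(K + M - 1) * (K + M - 2) = K * (K - 1) + 2 * ((M - 1) * K) + (M - 1) * (M - 2)"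
    by (simp add: algebra_simps)
  moreover have "M \<ge> 4"
    using m by (simp add: M_def)
  moreover have "(M - 1) * (M - 2) \<ge> 3 * 2"
    using m by (intro mult_mono) (auto simp: M_def)
  ultimately have "2 * ((K + M - 1) * (K + M - 2) div 2) + 2 - 2 * int d \<ge> 12"
    unfolding two_mult_consecutive_prod_div_2 by linarith
  then show ?thesis
    by (simp add: K_def M_def)
qed

lemma s_formula_le_2:
  fixes k d :: nat
  assumes "k * (k - 1) div 2 \<le> d + 1"
  shows "(int (k + 1) - 1) * (int (k + 1) - 2) div 2 + 1 - int d \<le> 2"
proof -
  have "(int (k + 1) - 1) * (int (k + 1) - 2) = int (2 * (k * (k - 1) div 2))"
    unfolding two_mult_pairs_div_2 by (cases k) (simp_all add: algebra_simps)
  then have "(int (k + 1) - 1) * (int (k + 1) - 2) div 2 = int (k * (k - 1) div 2)"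
    by simp
  then show ?thesis
    using assms by linarith
qed


context fin_dim_lie
begin

lemma s_inv_eq:
  assumes "quot_dim (ev_preimage {0} \<inter> fa_sq) (hopf_rel {0}) d"
  shows "s_inv scale br =
    (int (dim (UNIV :: 'v set)) - 1) * (int (dim (UNIV :: 'v set)) - 2) div 2 + 1 - int d"
  using schur_dim_eq[OF assms] by (simp add: s_inv_def Let_def)

lemma s_inv_ge_6:
  assumes nil: "nilpotent_lie scale br" and L2: "dim L2 \<ge> 4"
  shows "s_inv scale br \<ge> 6"
proof -
  obtain d where q: "quot_dim (ev_preimage {0} \<inter> fa_sq) (hopf_rel {0}) d"
    using exists_quot_dim by blast
  define k where "k = dim (UNIV :: 'v set) - dim L2"
  have "dim (UNIV :: 'v set) = k + dim L2"
    using dim_subset[of L2 UNIV] by (simp add: k_def)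
  moreover have "d + dim L2 \<le> k * (k - 1) div 2 + 2 + (dim L2 - 1) * k"
    using quot_dim_upper_bound[OF nil _ q] L2 by (simp add: k_def)
  ultimately show ?thesis
    using s_formula_ge_6[OF L2] s_inv_eq[OF q] by simp
qed

lemma s_inv_le_2:
  assumes nil: "nilpotent_lie scale br" and nab: "\<not> abelian_lie br" and L2: "dim L2 = 1"
  shows "s_inv scale br \<le> 2"
proof -
  obtain d where q: "quot_dim (ev_preimage {0} \<inter> fa_sq) (hopf_rel {0}) d"
    using exists_quot_dim by blast
  obtain k where "dim (UNIV :: 'v set) = k + 1" "k * (k - 1) div 2 \<le> d + 1"
    using quot_dim_lower_bound[OF nil nab L2 q] by blast
  then show ?thesis
    using s_formula_le_2 s_inv_eq[OF q] by simp
qed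

end

lemma lie_algebra_finite_dim_imp_fin_dim_lie:
  assumes "lie_algebra scale br" "finite_dim scale"
  obtains Basis where "fin_dim_lie scale br Basis"
proof -
  interpret lie scale br
    using assms(1) by (rule lie_algebra_imp_lie)
  obtain B0 where B0: "finite B0" "span B0 = UNIV"
    using assms(2) unfolding finite_dim_def by blast
  obtain B where B: "B \<subseteq> B0" "independent B" "B0 \<subseteq> span B"
    using maximal_independent_subset[of B0] by blast
  have "span B = UNIV"
    using B0(2) B(3) span_minimal[of B0 "span B"] by auto
  then have "fin_dim_lie scale br B"
    using B finite_subset[OF B(1) B0(1)] by unfold_locales auto
  then show ?thesis
    by (rule that)
qed

theorem lemma2p1:
  fixes scale :: "'f::field \<Rightarrow> 'v::ab_group_add \<Rightarrow> 'v"
    and br :: "'v \<Rightarrow> 'v \<Rightarrow> 'v"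
  assumes "alg_closed_field TYPE('f)"
    and "(2::'f) \<noteq> 0"
  shows "\<not> (lie_algebra scale br \<and> finite_dim scale \<and> nilpotent_lie scale br \<and>
             \<not> abelian_lie br \<and> s_inv scale br = 5 \<and>
             (vector_space.dim scale (derived scale br) \<ge> 4 \<or>
              vector_space.dim scale (derived scale br) = 1))"
proof
  assume L: "lie_algebra scale br \<and> finite_dim scale \<and> nilpotent_lie scale br \<and>
             \<not> abelian_lie br \<and> s_inv scale br = 5 \<and>
             (vector_space.dim scale (derived scale br) \<ge> 4 \<or>
              vector_space.dim scale (derived scale br) = 1)"
  then obtain Basis where "fin_dim_lie scale br Basis"
    using lie_algebra_finite_dim_imp_fin_dim_lie by blast
  then interpret fin_dim_lie scale br Basis .
  have "s_inv scale br \<ge> 6 \<or> s_inv scale br \<le> 2"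
    using L s_inv_ge_6 s_inv_le_2 by blast
  then show False
    using L by simp
qed

end
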